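(* There is an absolute constant $c$ such that the following holds. Let $\mathbf A\in\mathbb R^{m\times n}$, let $\lambda_1\ge\lambda_2\ge\dots\ge\lambda_n$ be the eigenvalues of $\mathbf A^\top\mathbf A$, let $0<c_1\le c_2$ and $\gamma=c_2/c_1$, let $k\in\{1,\dots,n-1\}$ and $S\sim k\text{-}\mathrm{DPP}(\mathbf A^\top\mathbf A)$. 1. (Polynomial decay) If $p>1$ and $c_1i^{-p}\le\lambda_i\le c_2 i^{-p}$ for all $i$, then $\frac{\mathbb E[\mathrm{Er}_{\mathbf A}(S)]}{\mathrm{OPT}_k}\le c\gamma p$. 2. (Exponential decay) If $\delta\in(0,1)$ and $c_1(1-\delta)^i\le\lambda_i\le c_2(1-\delta)^i$ for all $i$, then $\frac{\mathbb E[\mathrm{Er}_{\mathbf A}(S)]}{\mathrm{OPT}_k}\le c\gamma(1+\delta k)$.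
   Context: For $\mathbf A\in\mathbb R^{m\times n}$ with columns $\mathbf a_1,\dots,\mathbf a_n$ and $S\subseteq\{1,\dots,n\}$, $\mathbf P_S$ denotes the orthogonal projection onto $\mathrm{span}\{\mathbf a_i:i\in S\}$ and $\mathrm{Er}_{\mathbf A}(S)=\|\mathbf A-\mathbf P_S\mathbf A\|_F^2$. $\mathrm{OPT}_k=\min_{\mathrm{rank}(\mathbf B)=k}\|\mathbf A-\mathbf B\|_F^2=\sum_{i>k}\lambda_i$. $S\sim k\text{-}\mathrm{DPP}(\mathbf A^\top\mathbf A)$ denotes the distribution over subsets $S\subseteq\{1,\dots,n\}$ with $|S|=k$ and $\Pr(S)\propto\det(\mathbf A_S^\top\mathbf A_S)$, where $\mathbf A_S$ is the submatrix of columns indexed by $S$. *)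

theory Defs
  imports Jordan_Normal_Form.Char_Poly Jordan_Normal_Form.DL_Submatrix
begin

(* Columns of A : real mat (A \<in> carrier_mat m n) are indexed 0..n-1. *)

definition cols_sub :: "real mat \<Rightarrow> nat set \<Rightarrow> real mat" where
  "cols_sub A S = submatrix A {..<dim_row A} S"

definition col_span :: "real mat \<Rightarrow> nat set \<Rightarrow> real vec set" where
  "col_span A S = {cols_sub A S *\<^sub>v x | x. x \<in> carrier_vec (dim_col (cols_sub A S))}"

definition orth_proj :: "nat \<Rightarrow> real vec set \<Rightarrow> real mat" where
  "orth_proj m V = (THE P. P \<in> carrier_mat m m \<and> P * P = P \<and> transpose_mat P = P
      \<and> {P *\<^sub>v v | v. v \<in> carrier_vec m} = V)"

definition proj_S :: "real mat \<Rightarrow> nat set \<Rightarrow> real mat" where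
  "proj_S A S = orth_proj (dim_row A) (col_span A S)"

definition frob_sq :: "real mat \<Rightarrow> real" where
  "frob_sq B = (\<Sum>i<dim_row B. \<Sum>j<dim_col B. (B $$ (i, j))\<^sup>2)"

definition Er :: "real mat \<Rightarrow> nat set \<Rightarrow> real" where
  "Er A S = frob_sq (A - proj_S A S * A)"

definition ksubsets :: "nat \<Rightarrow> nat \<Rightarrow> nat set set" where
  "ksubsets n k = {S. S \<subseteq> {..<n} \<and> card S = k}"

definition dpp_weight :: "real mat \<Rightarrow> nat set \<Rightarrow> real" where
  "dpp_weight A S = det (transpose_mat (cols_sub A S) * cols_sub A S)"

definition kDPP_expect :: "real mat \<Rightarrow> nat \<Rightarrow> (nat set \<Rightarrow> real) \<Rightarrow> real" where
  "kDPP_expect A k f =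
     (\<Sum>S\<in>ksubsets (dim_col A) k. dpp_weight A S * f S) /
     (\<Sum>S\<in>ksubsets (dim_col A) k. dpp_weight A S)"

definition is_sorted_eigs :: "real mat \<Rightarrow> (nat \<Rightarrow> real) \<Rightarrow> bool" where
  "is_sorted_eigs A lam \<longleftrightarrow>
     (\<forall>i j. 1 \<le> i \<longrightarrow> i \<le> j \<longrightarrow> j \<le> dim_col A \<longrightarrow> lam j \<le> lam i) \<and>
     mset (map lam [1..<dim_col A + 1]) = proots (char_poly (transpose_mat A * A))"

definition OPT :: "real mat \<Rightarrow> (nat \<Rightarrow> real) \<Rightarrow> nat \<Rightarrow> real" where
  "OPT A lam k = (\<Sum>i\<in>{k<..dim_col A}. lam i)"

end

theory Submission
  imports Defs
begin

text \<open>Let \<open>e\<^sub>j\<close> be the \<open>j\<close>-th elementary symmetric polynomial of the eigenvalues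
  \<open>\<lambda>\<^sub>1 \<ge> \<dots> \<ge> \<lambda>\<^sub>n\<close> of \<open>A\<^sup>T A\<close>. Comparing coefficients of the characteristic polynomial, \<open>e\<^sub>j\<close> is
  the sum of the \<open>j \<times> j\<close> principal minors of \<open>A\<^sup>T A\<close>, i.e. of the DPP weights
  \<open>det (A\<^sub>S\<^sup>T A\<^sub>S)\<close>. By the Schur complement, \<open>det (A\<^sub>S\<^sup>T A\<^sub>S) Er(S)\<close> is the sum of the weights of
  the sets \<open>S \<union> {j}\<close>, \<open>j \<notin> S\<close>, so double counting gives \<open>E[Er(S)] = (k + 1) e\<^sub>k\<^sub>+\<^sub>1 / e\<^sub>k\<close>.

  Every \<open>(k + 1)\<close>-set has at least \<open>w + 1\<close> indices \<open>> k - w\<close>; removing one of them shows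
  \<open>(w + 1) e\<^sub>k\<^sub>+\<^sub>1 \<le> e\<^sub>k (OPT\<^sub>k + s \<lambda>\<^sub>k\<^sub>-\<^sub>w\<^sub>+\<^sub>1)\<close> with \<open>s = min (n - k) w\<close>, and
  \<open>s \<lambda>\<^sub>k\<^sub>+\<^sub>s \<le> OPT\<^sub>k\<close>. Hence \<open>E[Er(S)] / OPT\<^sub>k \<le> (k + 1) (1 + \<rho>) / (w + 1)\<close> where
  \<open>\<rho> \<ge> \<lambda>\<^sub>k\<^sub>-\<^sub>w\<^sub>+\<^sub>1 / \<lambda>\<^sub>k\<^sub>+\<^sub>s\<close>. Taking \<open>w \<approx> k / (2 p)\<close> for polynomial and \<open>w \<approx> min k (1 / \<delta>)\<close>
  for exponential decay makes \<open>\<rho>\<close> at most \<open>c\<^sub>2 / c\<^sub>1\<close> times a constant.\<close>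

definition principal_minor :: "(nat \<Rightarrow> nat \<Rightarrow> 'a :: comm_ring_1) \<Rightarrow> nat set \<Rightarrow> 'a" where
  "principal_minor M T = (\<Sum>p\<in>{p. p permutes T}. of_int (sign p) * (\<Prod>i\<in>T. M i (p i)))"

lemma principal_minor_cong:
  assumes "\<And>i j. i \<in> T \<Longrightarrow> j \<in> T \<Longrightarrow> M i j = M' i j"
  shows "principal_minor M T = principal_minor M' T"
  unfolding principal_minor_def
proof (rule sum.cong[OF refl])
  fix p assume "p \<in> {p. p permutes T}"
  then have "\<And>i. i \<in> T \<Longrightarrow> p i \<in> T" by (simp add: permutes_in_image)
  then show "of_int (sign p) * (\<Prod>i\<in>T. M i (p i)) = of_int (sign p) * (\<Prod>i\<in>T. M' i (p i))"
    using assms by (simp cong: prod.cong)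
qed

lemma principal_minor_uminus:
  "finite T \<Longrightarrow> principal_minor (\<lambda>i j. - M i j) T = (-1) ^ card T * principal_minor M T"
  unfolding principal_minor_def by (simp add: prod_uminus sum_distrib_left mult_ac)

lemma principal_minor_mat_reindex:
  assumes f: "bij_betw f {..<m} T"
  shows "det (mat m m (\<lambda>(a, b). M (f a) (f b))) = principal_minor M T"
proof -
  let ?A = "{0..<m}"
  have fA: "bij_betw f ?A T" using f by (simp add: atLeast0LessThan)
  have inj: "inj_on f ?A" using fA bij_betw_def by blast
  let ?h = "map_permutation ?A f"
  have bij: "bij_betw ?h {p. p permutes ?A} {p. p permutes T}"
  proof -
    have "?h = (\<lambda>\<pi> x. if x \<in> T then f (\<pi> (inv_into ?A f x)) else x)"
      using fA unfolding map_permutation_def restrict_id_def bij_betw_def by (auto simp: fun_eq_iff)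
    then show ?thesis using bij_betw_permutations[OF fA] by simp
  qed
  have h_f: "?h p (f a) = f (p a)" if "p permutes ?A" "a \<in> ?A" for p a
    using that inj by (simp add: map_permutation_apply)
  have "principal_minor M T = (\<Sum>p | p permutes ?A. of_int (sign (?h p)) * (\<Prod>i\<in>T. M i (?h p i)))"
    unfolding principal_minor_def by (rule sum.reindex_bij_betw[OF bij, symmetric])
  also have "\<dots> = (\<Sum>p | p permutes ?A. of_int (sign p) * (\<Prod>a\<in>?A. M (f a) (f (p a))))"
  proof (rule sum.cong[OF refl])
    fix p assume p: "p \<in> {p. p permutes ?A}"
    have "sign (?h p) = sign p" by (rule sign_map_permutation[OF inj]) (use p in auto)
    moreover have "(\<Prod>i\<in>T. M i (?h p i)) = (\<Prod>a\<in>?A. M (f a) (f (p a)))"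
      using p by (simp add: prod.reindex_bij_betw[OF fA, symmetric] h_f)
    ultimately show "of_int (sign (?h p)) * (\<Prod>i\<in>T. M i (?h p i)) =
        of_int (sign p) * (\<Prod>a\<in>?A. M (f a) (f (p a)))" by simp
  qed
  also have "\<dots> = det (mat m m (\<lambda>(a, b). M (f a) (f b)))"
    unfolding det_def'[OF mat_carrier]
    by (intro sum.cong refl arg_cong2[where f = "(*)"] prod.cong)
       (auto dest: permutes_in_image)
  finally show ?thesis by simp
qed

lemma permutes_iff_fixes_complement:
  assumes "X \<subseteq> A"
  shows "(p permutes A \<and> (\<forall>i\<in>A - X. p i = i)) \<longleftrightarrow> p permutes X"
proof
  assume "p permutes X"
  then show "p permutes A \<and> (\<forall>i\<in>A - X. p i = i)"
    using permutes_subset[OF _ assms] by (auto simp: permutes_not_in)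
next
  assume "p permutes A \<and> (\<forall>i\<in>A - X. p i = i)"
  then show "p permutes X" unfolding permutes_def by (metis Diff_iff)
qed

lemma sum_permutes_fixing_outside:
  fixes M :: "nat \<Rightarrow> nat \<Rightarrow> 'a :: comm_ring_1"
  assumes "finite A" and X: "X \<subseteq> A"
  shows "(\<Sum>p | p permutes A. of_int (sign p) *
      ((\<Prod>i\<in>X. M i (p i)) * (\<Prod>i\<in>A - X. if p i = i then x else 0)))
    = x ^ card (A - X) * principal_minor M X"
proof -
  have "of_int (sign p) * ((\<Prod>i\<in>X. M i (p i)) * (\<Prod>i\<in>A - X. if p i = i then x else 0)) =
      (if \<forall>i\<in>A - X. p i = i then x ^ card (A - X) * (of_int (sign p) * (\<Prod>i\<in>X. M i (p i))) else 0)" for p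
  proof (cases "\<forall>i\<in>A - X. p i = i")
    case True
    then have "(\<Prod>i\<in>A - X. if p i = i then x else 0) = (\<Prod>i\<in>A - X. x)" by (intro prod.cong) auto
    then show ?thesis using True by simp
  next
    case False
    then have "(\<Prod>i\<in>A - X. if p i = i then x else 0) = 0" by (intro prod_zero) (use assms in auto)
    then show ?thesis unfolding if_not_P[OF False] by simp
  qed
  then have "(\<Sum>p | p permutes A. of_int (sign p) *
      ((\<Prod>i\<in>X. M i (p i)) * (\<Prod>i\<in>A - X. if p i = i then x else 0))) =
      (\<Sum>p | p permutes A \<and> (\<forall>i\<in>A - X. p i = i). x ^ card (A - X) * (of_int (sign p) * (\<Prod>i\<in>X. M i (p i))))"
    using assms(1) by (simp add: sum.inter_filter[symmetric] finite_permutations Collect_conj_eq)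
  also have "{p. p permutes A \<and> (\<forall>i\<in>A - X. p i = i)} = {p. p permutes X}"
    using permutes_iff_fixes_complement[OF X] by auto
  finally show ?thesis unfolding principal_minor_def by (simp add: sum_distrib_left)
qed

lemma det_add_smult_one_mat:
  fixes M :: "'a :: comm_ring_1 mat"
  assumes M: "M \<in> carrier_mat n n"
  shows "det (M + x \<cdot>\<^sub>m 1\<^sub>m n) =
    (\<Sum>X\<in>Pow {0..<n}. x ^ (n - card X) * principal_minor (\<lambda>i j. M $$ (i, j)) X)"
proof -
  let ?A = "{0..<n}"
  let ?d = "\<lambda>p i. if p i = i then x else 0"
  have C: "M + x \<cdot>\<^sub>m 1\<^sub>m n \<in> carrier_mat n n" using M by auto
  have "det (M + x \<cdot>\<^sub>m 1\<^sub>m n) = (\<Sum>p | p permutes ?A. of_int (sign p) * (\<Prod>i\<in>?A. M $$ (i, p i) + ?d p i))"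
    unfolding det_def'[OF C]
  proof (rule sum.cong[OF refl])
    fix p assume p: "p \<in> {p. p permutes ?A}"
    have "(\<Prod>i = 0..<n. (M + x \<cdot>\<^sub>m 1\<^sub>m n) $$ (i, p i)) = (\<Prod>i\<in>?A. M $$ (i, p i) + ?d p i)"
      by (rule prod.cong[OF refl]) (use M p in \<open>auto dest: permutes_in_image\<close>)
    then show "signof p * (\<Prod>i = 0..<n. (M + x \<cdot>\<^sub>m 1\<^sub>m n) $$ (i, p i)) =
        of_int (sign p) * (\<Prod>i\<in>?A. M $$ (i, p i) + ?d p i)" by simp
  qed
  also have "\<dots> = (\<Sum>X\<in>Pow ?A. \<Sum>p | p permutes ?A.
      of_int (sign p) * ((\<Prod>i\<in>X. M $$ (i, p i)) * (\<Prod>i\<in>?A - X. ?d p i)))"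
    by (simp add: prod_add sum_distrib_left sum.swap[of _ "Pow ?A"])
  also have "\<dots> = (\<Sum>X\<in>Pow ?A. x ^ (n - card X) * principal_minor (\<lambda>i j. M $$ (i, j)) X)"
    by (intro sum.cong refl)
       (auto simp: sum_permutes_fixing_outside[where M = "\<lambda>i j. M $$ (i, j)"] card_Diff_subset finite_subset)
  finally show ?thesis .
qed

lemma prod_proots_linear_factors_dvd:
  fixes p :: "'a :: idom poly"
  shows "(\<Prod>x\<in>#proots p. [:-x, 1:]) dvd p"
proof (induction p rule: poly_root_order_induct)
  case (no_roots p)
  then have "proots p = {#}" by (intro multiset_eqI) (auto simp: order_root)
  then show ?case by simp
next
  case (root p x n)
  then have "proots ([:-x, 1:] ^ n * p) = proots ([:-x, 1:] ^ n) + proots p"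
    by (intro proots_mult) auto
  also have "proots ([:-x, 1:] ^ n) = replicate_mset n x"
    using proots_linear_factor[of "-x"] by (simp add: proots_power)
  finally show ?case using root.IH by (simp add: mult_dvd_mono)
qed simp

lemma poly_char_poly_eq_prod:
  fixes G :: "'a :: idom mat"
  assumes G: "G \<in> carrier_mat n n"
    and ev: "mset (map lam [1..<n+1]) = proots (char_poly G)"
  shows "poly (char_poly G) x = (\<Prod>i\<in>{1..n}. x - lam i)"
proof -
  let ?p = "char_poly G"
  define Q where "Q = (\<Prod>a\<leftarrow>map lam [1..<n+1]. [:-a, 1:])"
  have monic: "degree ?p = n" "coeff ?p n = 1" using degree_monic_char_poly[OF G] by auto
  have "(\<Prod>x\<in>#proots ?p. [:-x, 1:]) = Q"
    unfolding Q_def ev[symmetric] by (metis mset_map prod_mset_prod_list)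
  then have "Q dvd ?p" using prod_proots_linear_factors_dvd[of ?p] by simp
  then obtain r where r: "?p = Q * r" by (elim dvdE)
  have dQ: "degree Q = n" unfolding Q_def using degree_linear_factors[of uminus "map lam [1..<n+1]"] by simp
  have mQ: "monic Q" unfolding Q_def by (rule monic_prod_list) auto
  have "r \<noteq> 0" using r monic by auto
  then have "degree ?p = degree Q + degree r" unfolding r using mQ by (intro degree_mult_eq) auto
  then have "degree r = 0" using monic dQ by simp
  moreover have "lead_coeff r = 1"
    using lead_coeff_mult[of Q r] mQ monic \<open>degree r = 0\<close> unfolding r[symmetric] by simp
  ultimately have "r = 1" by (metis monic_degree_0)
  then have "?p = Q" using r by simp
  moreover have "poly Q x = (\<Prod>i\<leftarrow>[1..<n+1]. x - lam i)"
    unfolding Q_def by (simp add: poly_prod_list o_def)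
  moreover have "set [1..<n+1] = {1..n}" by auto
  then have "(\<Prod>i\<leftarrow>[1..<n+1]. x - lam i) = (\<Prod>i\<in>{1..n}. x - lam i)"
    by (metis distinct_upt prod.distinct_set_conv_list)
  ultimately show ?thesis by simp
qed

definition esym :: "(nat \<Rightarrow> real) \<Rightarrow> nat \<Rightarrow> nat \<Rightarrow> real" where
  "esym \<mu> n j = (\<Sum>X\<in>ksubsets n j. \<Prod>i\<in>X. \<mu> i)"

lemma ksubsetsD:
  assumes "X \<in> ksubsets n k"
  shows "X \<subseteq> {..<n}" and "finite X" and "card X = k"
  using assms unfolding ksubsets_def by (auto intro: finite_subset)

lemma finite_ksubsets [simp]: "finite (ksubsets n k)"
  unfolding ksubsets_def by (rule finite_subset[of _ "Pow {..<n}"]) auto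

lemma lessThan_in_ksubsets: "k \<le> n \<Longrightarrow> {..<k} \<in> ksubsets n k"
  unfolding ksubsets_def by auto

lemma ksubsets_self: "ksubsets n n = {{..<n}}"
proof
  show "ksubsets n n \<subseteq> {{..<n}}"
    using card_subset_eq[of "{..<n}"] by (auto simp: ksubsets_def)
qed (auto simp: ksubsets_def)

lemma sum_Pow_group_by_card:
  fixes f :: "nat set \<Rightarrow> 'a :: comm_semiring_1"
  shows "(\<Sum>X\<in>Pow {..<n}. x ^ (n - card X) * f X) = (\<Sum>i\<le>n. (\<Sum>X\<in>ksubsets n (n - i). f X) * x ^ i)"
proof -
  have "(\<Sum>X\<in>Pow {..<n}. x ^ (n - card X) * f X) =
      (\<Sum>i\<le>n. \<Sum>X | X \<in> Pow {..<n} \<and> n - card X = i. x ^ (n - card X) * f X)"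
    by (rule sum.group[symmetric]) auto
  also have "\<dots> = (\<Sum>i\<le>n. (\<Sum>X\<in>ksubsets n (n - i). f X) * x ^ i)"
  proof (rule sum.cong[OF refl])
    fix i assume i: "i \<in> {..n}"
    have "card X \<le> n" if "X \<subseteq> {..<n}" for X
      using card_mono[OF _ that] by simp
    then have "{X. X \<in> Pow {..<n} \<and> n - card X = i} = ksubsets n (n - i)"
      using i unfolding ksubsets_def by force
    moreover have "(\<Sum>X\<in>ksubsets n (n - i). x ^ (n - card X) * f X) = (\<Sum>X\<in>ksubsets n (n - i). x ^ i * f X)"
      using i by (intro sum.cong) (auto simp: ksubsets_def)
    moreover have "(\<Sum>X\<in>ksubsets n (n - i). x ^ i * f X) = (\<Sum>X\<in>ksubsets n (n - i). f X) * x ^ i"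
      by (metis mult.commute sum_distrib_left)
    ultimately show "(\<Sum>X | X \<in> Pow {..<n} \<and> n - card X = i. x ^ (n - card X) * f X) =
        (\<Sum>X\<in>ksubsets n (n - i). f X) * x ^ i" by simp
  qed
  finally show ?thesis .
qed

lemma sum_ksubsets_eq_of_poly_eq:
  fixes a b :: "nat set \<Rightarrow> real"
  assumes "\<And>x. (\<Sum>X\<in>Pow {..<n}. x ^ (n - card X) * a X) = (\<Sum>X\<in>Pow {..<n}. x ^ (n - card X) * b X)"
    and "j \<le> n"
  shows "(\<Sum>X\<in>ksubsets n j. a X) = (\<Sum>X\<in>ksubsets n j. b X)"
proof -
  have "\<forall>x. (\<Sum>i\<le>n. (\<Sum>X\<in>ksubsets n (n - i). a X) * x ^ i) = (\<Sum>i\<le>n. (\<Sum>X\<in>ksubsets n (n - i). b X) * x ^ i)"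
    using assms(1) unfolding sum_Pow_group_by_card by simp
  then have "\<forall>i\<le>n. (\<Sum>X\<in>ksubsets n (n - i). a X) = (\<Sum>X\<in>ksubsets n (n - i). b X)"
    by (subst (asm) polyfun_eq_coeffs)
  from this[rule_format, of "n - j"] show ?thesis using assms(2) by simp
qed

lemma poly_char_poly_eq_sum_principal_minors:
  fixes G :: "real mat"
  assumes G: "G \<in> carrier_mat n n"
  shows "poly (char_poly G) x =
    (\<Sum>X\<in>Pow {..<n}. x ^ (n - card X) * ((-1) ^ card X * principal_minor (\<lambda>a b. G $$ (a, b)) X))"
proof -
  have "poly (char_poly G) x = det (- G + x \<cdot>\<^sub>m 1\<^sub>m n)"
    unfolding char_poly_def
    by (rule poly_det_cong[of _ n]) (use G in \<open>auto simp: char_poly_matrix_def\<close>)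
  also have "\<dots> = (\<Sum>X\<in>Pow {0..<n}. x ^ (n - card X) * principal_minor (\<lambda>i j. (- G) $$ (i, j)) X)"
    by (rule det_add_smult_one_mat) (use G in simp)
  also have "\<dots> = (\<Sum>X\<in>Pow {..<n}. x ^ (n - card X) * ((-1) ^ card X * principal_minor (\<lambda>a b. G $$ (a, b)) X))"
  proof (rule sum.cong)
    fix X assume X: "X \<in> Pow {..<n}"
    then have "principal_minor (\<lambda>i j. (- G) $$ (i, j)) X = principal_minor (\<lambda>i j. - G $$ (i, j)) X"
      by (intro principal_minor_cong) (use G in \<open>auto simp: subset_iff\<close>)
    also have "\<dots> = (-1) ^ card X * principal_minor (\<lambda>a b. G $$ (a, b)) X"
      using X by (intro principal_minor_uminus) (auto intro: finite_subset)
    finally show "x ^ (n - card X) * principal_minor (\<lambda>i j. (- G) $$ (i, j)) X =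
        x ^ (n - card X) * ((-1) ^ card X * principal_minor (\<lambda>a b. G $$ (a, b)) X)" by simp
  qed (simp add: atLeast0LessThan)
  finally show ?thesis .
qed

text \<open>Both sides are, up to sign, coefficients of the characteristic polynomial:
  one from expanding \<open>det (x I - G)\<close>, the other from \<open>\<Prod>i. (x - \<lambda>\<^sub>i)\<close>.\<close>

lemma sum_principal_minors_eq_esym:
  fixes G :: "real mat"
  assumes G: "G \<in> carrier_mat n n"
    and ev: "mset (map lam [1..<n+1]) = proots (char_poly G)"
    and j: "j \<le> n"
  shows "(\<Sum>X\<in>ksubsets n j. principal_minor (\<lambda>a b. G $$ (a, b)) X) = esym (\<lambda>i. lam (Suc i)) n j"
proof -
  let ?e = "\<lambda>X. \<Prod>i\<in>X. lam (Suc i)"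
  have "poly (char_poly G) x = (\<Prod>i<n. x - lam (Suc i))" for x
  proof -
    have "(\<Prod>i<n. x - lam (Suc i)) = (\<Prod>i\<in>Suc ` {..<n}. x - lam i)"
      by (simp add: prod.reindex)
    then show ?thesis using poly_char_poly_eq_prod[OF G ev] by (simp add: image_Suc_lessThan)
  qed
  also have "(\<Prod>i<n. x - lam (Suc i)) = (\<Sum>X\<in>Pow {..<n}. (-1) ^ card X * ?e X * (\<Prod>i\<in>{..<n} - X. x))" for x
    by (rule prod_diff_conv_sum) simp
  also have "\<dots> x = (\<Sum>X\<in>Pow {..<n}. x ^ (n - card X) * ((-1) ^ card X * ?e X))" for x
    by (intro sum.cong) (auto simp: card_Diff_subset finite_subset)
  finally have "(\<Sum>X\<in>ksubsets n j. (-1) ^ card X * principal_minor (\<lambda>a b. G $$ (a, b)) X) =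
      (\<Sum>X\<in>ksubsets n j. (-1) ^ card X * ?e X)"
    unfolding poly_char_poly_eq_sum_principal_minors[OF G] by (rule sum_ksubsets_eq_of_poly_eq[OF _ j])
  moreover have "(\<Sum>X\<in>ksubsets n j. (-1) ^ card X * f X) = (-1) ^ j * (\<Sum>X\<in>ksubsets n j. f X)" for f :: "nat set \<Rightarrow> real"
    by (simp add: sum_distrib_left ksubsets_def)
  ultimately show ?thesis unfolding esym_def by simp
qed

lemma esym_pos:
  assumes "\<And>i. i < n \<Longrightarrow> 0 < \<mu> i" and "k \<le> n"
  shows "0 < esym \<mu> n k"
  unfolding esym_def
proof (rule sum_pos2[of _ "{..<k}"])
  show "{..<k} \<in> ksubsets n k" using assms(2) by (rule lessThan_in_ksubsets)
  show "0 < (\<Prod>i<k. \<mu> i)" using assms by (intro prod_pos) auto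
  show "0 \<le> (\<Prod>i\<in>X. \<mu> i)" if "X \<in> ksubsets n k" for X
    using that assms(1) ksubsetsD(1)[OF that] by (intro prod_nonneg) (auto intro: less_imp_le)
qed simp

lemma sum_ksubsets_insert:
  "(\<Sum>S\<in>ksubsets n k. \<Sum>i\<in>{..<n} - S. F (insert i S) i) = (\<Sum>T\<in>ksubsets n (Suc k). \<Sum>i\<in>T. F T i)"
proof -
  let ?P = "Sigma (ksubsets n k) (\<lambda>S. {..<n} - S)"
  let ?Q = "Sigma (ksubsets n (Suc k)) (\<lambda>T. T)"
  have "(\<Sum>S\<in>ksubsets n k. \<Sum>i\<in>{..<n} - S. F (insert i S) i) = (\<Sum>(S, i)\<in>?P. F (insert i S) i)"
    by (rule sum.Sigma) auto
  also have "\<dots> = (\<Sum>(T, i)\<in>?Q. F T i)"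
  proof (rule sum.reindex_bij_witness[where i = "\<lambda>(T, i). (T - {i}, i)" and j = "\<lambda>(S, i). (insert i S, i)"])
    fix a assume "a \<in> ?P"
    then show "(\<lambda>(S, i). (insert i S, i)) a \<in> ?Q"
      by (auto simp: ksubsets_def card_insert_if finite_subset)
  next
    fix b assume b: "b \<in> ?Q"
    obtain T i where "b = (T, i)" by fastforce
    with b show "(\<lambda>(T, i). (T - {i}, i)) b \<in> ?P"
      using ksubsetsD(2)[of T n "Suc k"] by (auto simp: ksubsets_def card_Diff_singleton)
  qed (auto simp: ksubsets_def)
  also have "\<dots> = (\<Sum>T\<in>ksubsets n (Suc k). \<Sum>i\<in>T. F T i)"
    by (rule sum.Sigma[symmetric]) (auto dest: ksubsetsD(2))
  finally show ?thesis .
qed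

lemma card_le_add_card_Int_atLeastLessThan:
  assumes "T \<subseteq> {..<n}"
  shows "card T \<le> r + card (T \<inter> {r..<n})"
proof -
  have "T \<subseteq> {..<r} \<union> (T \<inter> {r..<n})" using assms by auto
  then have "card T \<le> card ({..<r} \<union> (T \<inter> {r..<n}))" by (rule card_mono[rotated]) auto
  also have "\<dots> \<le> r + card (T \<inter> {r..<n})" using card_Un_le[of "{..<r}"] by simp
  finally show ?thesis .
qed

text \<open>The indices of \<open>{k - w..<n}\<close> missed by \<open>S\<close> either lie below \<open>k\<close> (at most \<open>w\<close>
  of them, each with weight at most \<open>\<mu> (k - w)\<close>) or in the tail; and since \<open>S\<close> has at least
  \<open>w\<close> elements in \<open>{k - w..<n}\<close>, at most \<open>n - k\<close> of them are missed.\<close>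

lemma sum_outside_ksubset_le:
  fixes \<mu> :: "nat \<Rightarrow> real"
  assumes nonneg: "\<And>i. i < n \<Longrightarrow> 0 \<le> \<mu> i"
    and mono: "\<And>i j. i \<le> j \<Longrightarrow> j < n \<Longrightarrow> \<mu> j \<le> \<mu> i"
    and "k < n" and "w \<le> k" and S: "S \<in> ksubsets n k"
  shows "(\<Sum>i\<in>{k-w..<n} - S. \<mu> i) \<le> (\<Sum>i\<in>{k..<n}. \<mu> i) + real (min (n - k) w) * \<mu> (k - w)"
proof -
  let ?r = "k - w"
  let ?L = "{?r..<n}"
  have le_r: "\<mu> i \<le> \<mu> ?r" if "i \<in> ?L" for i using that mono by auto
  have tail_nonneg: "0 \<le> (\<Sum>i\<in>{k..<n}. \<mu> i)" using nonneg by (intro sum_nonneg) auto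
  have "(\<Sum>i\<in>?L - S. \<mu> i) \<le> (\<Sum>i\<in>{k..<n}. \<mu> i) + real w * \<mu> ?r"
  proof -
    have "(\<Sum>i\<in>?L - S. \<mu> i) \<le> (\<Sum>i\<in>?L. \<mu> i)"
      using nonneg by (intro sum_mono2) auto
    also have "\<dots> = (\<Sum>i\<in>{?r..<k}. \<mu> i) + (\<Sum>i\<in>{k..<n}. \<mu> i)"
      using assms(3,4) by (simp add: sum.atLeastLessThan_concat)
    also have "(\<Sum>i\<in>{?r..<k}. \<mu> i) \<le> (\<Sum>i\<in>{?r..<k}. \<mu> ?r)"
      using le_r assms(3) by (intro sum_mono) auto
    finally show ?thesis using assms(4) by simp
  qed
  moreover have "(\<Sum>i\<in>?L - S. \<mu> i) \<le> real (n - k) * \<mu> ?r"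
  proof -
    have "card S \<le> ?r + card (S \<inter> ?L)"
      using ksubsetsD(1)[OF S] by (rule card_le_add_card_Int_atLeastLessThan)
    then have "card (?L - S) \<le> n - k"
      using ksubsetsD(3)[OF S] assms(3,4) by (simp add: card_Diff_subset_Int Int_commute)
    moreover have "(\<Sum>i\<in>?L - S. \<mu> i) \<le> real (card (?L - S)) * \<mu> ?r"
      using sum_mono[of "?L - S" \<mu> "\<lambda>_. \<mu> ?r"] le_r by simp
    moreover have "0 \<le> \<mu> ?r" using nonneg assms(3) by simp
    ultimately show ?thesis by (meson mult_right_mono of_nat_mono order_trans)
  qed
  ultimately show ?thesis using tail_nonneg by (cases "w \<le> n - k") (auto simp: min_def)
qed

text \<open>Every \<open>(k + 1)\<close>-subset \<open>T\<close> has at least \<open>w + 1\<close> elements in \<open>{k - w..<n}\<close>; removing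
  one of them leaves a \<open>k\<close>-subset \<open>S\<close>, and the removed index is one missed by \<open>S\<close>.\<close>

lemma esym_Suc_le:
  fixes \<mu> :: "nat \<Rightarrow> real"
  assumes nonneg: "\<And>i. i < n \<Longrightarrow> 0 \<le> \<mu> i"
    and mono: "\<And>i j. i \<le> j \<Longrightarrow> j < n \<Longrightarrow> \<mu> j \<le> \<mu> i"
    and kn: "k < n" and wk: "w \<le> k"
  shows "real (w + 1) * esym \<mu> n (Suc k) \<le>
    esym \<mu> n k * ((\<Sum>i\<in>{k..<n}. \<mu> i) + real (min (n - k) w) * \<mu> (k - w))"
proof -
  let ?L = "{k - w..<n}"
  let ?B = "(\<Sum>i\<in>{k..<n}. \<mu> i) + real (min (n - k) w) * \<mu> (k - w)"
  define F where "F = (\<lambda>T i. if i \<in> ?L then (\<Prod>j\<in>T. \<mu> j) else 0)"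
  have prod_nonneg: "0 \<le> (\<Prod>j\<in>X. \<mu> j)" if "X \<subseteq> {..<n}" for X
    using that nonneg by (intro prod_nonneg) auto
  have "real (w + 1) * (\<Prod>j\<in>T. \<mu> j) \<le> (\<Sum>i\<in>T. F T i)" if T: "T \<in> ksubsets n (Suc k)" for T
  proof -
    have "card T \<le> k - w + card (T \<inter> ?L)"
      using ksubsetsD(1)[OF T] by (rule card_le_add_card_Int_atLeastLessThan)
    then have "w + 1 \<le> card (T \<inter> ?L)" using ksubsetsD(3)[OF T] wk by simp
    moreover have "(\<Sum>i\<in>T. F T i) = real (card (T \<inter> ?L)) * (\<Prod>j\<in>T. \<mu> j)"
      unfolding F_def using ksubsetsD(2)[OF T] by (simp add: sum.inter_filter[symmetric] Int_def)
    ultimately show ?thesis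
      using prod_nonneg[OF ksubsetsD(1)[OF T]] by (simp add: mult_right_mono)
  qed
  then have "real (w + 1) * esym \<mu> n (Suc k) \<le> (\<Sum>T\<in>ksubsets n (Suc k). \<Sum>i\<in>T. F T i)"
    unfolding esym_def sum_distrib_left by (rule sum_mono)
  also have "\<dots> = (\<Sum>S\<in>ksubsets n k. \<Sum>i\<in>{..<n} - S. F (insert i S) i)"
    by (rule sum_ksubsets_insert[symmetric])
  also have "\<dots> = (\<Sum>S\<in>ksubsets n k. (\<Prod>j\<in>S. \<mu> j) * (\<Sum>i\<in>?L - S. \<mu> i))"
  proof (rule sum.cong[OF refl])
    fix S assume S: "S \<in> ksubsets n k"
    have "(\<Sum>i\<in>{..<n} - S. F (insert i S) i) = (\<Sum>i\<in>{..<n} - S. if i \<in> ?L then (\<Prod>j\<in>S. \<mu> j) * \<mu> i else 0)"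
      using ksubsetsD(2)[OF S] by (intro sum.cong) (auto simp: F_def mult.commute)
    also have "\<dots> = (\<Sum>i\<in>?L - S. (\<Prod>j\<in>S. \<mu> j) * \<mu> i)"
      by (simp add: sum.inter_filter[symmetric]) (rule sum.cong, auto)
    finally show "(\<Sum>i\<in>{..<n} - S. F (insert i S) i) = (\<Prod>j\<in>S. \<mu> j) * (\<Sum>i\<in>?L - S. \<mu> i)"
      by (simp add: sum_distrib_left)
  qed
  also have "\<dots> \<le> (\<Sum>S\<in>ksubsets n k. (\<Prod>j\<in>S. \<mu> j) * ?B)"
    using sum_outside_ksubset_le[OF nonneg mono kn wk] prod_nonneg ksubsetsD(1)
    by (intro sum_mono mult_left_mono) auto
  also have "\<dots> = esym \<mu> n k * ?B" unfolding esym_def by (simp add: sum_distrib_right)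
  finally show ?thesis .
qed

lemma esym_Suc_div_le:
  fixes \<mu> :: "nat \<Rightarrow> real"
  assumes pos: "\<And>i. i < n \<Longrightarrow> 0 < \<mu> i"
    and mono: "\<And>i j. i \<le> j \<Longrightarrow> j < n \<Longrightarrow> \<mu> j \<le> \<mu> i"
    and kn: "k < n"
  shows "esym \<mu> n (Suc k) / esym \<mu> n k \<le> (\<Sum>i\<in>{k..<n}. \<mu> i)"
proof -
  have "real (0 + 1) * esym \<mu> n (Suc k) \<le> esym \<mu> n k * ((\<Sum>i\<in>{k..<n}. \<mu> i) + real (min (n - k) 0) * \<mu> (k - 0))"
    using pos by (intro esym_Suc_le[OF _ mono kn]) (auto intro: less_imp_le)
  moreover have "0 < esym \<mu> n k" using pos kn by (intro esym_pos) auto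
  ultimately show ?thesis by (simp add: divide_le_eq mult.commute)
qed

lemma esym_Suc_div_le_window:
  fixes \<mu> :: "nat \<Rightarrow> real"
  assumes pos: "\<And>i. i < n \<Longrightarrow> 0 < \<mu> i"
    and mono: "\<And>i j. i \<le> j \<Longrightarrow> j < n \<Longrightarrow> \<mu> j \<le> \<mu> i"
    and kn: "k < n" and w1: "1 \<le> w" and wk: "w \<le> k"
    and rho: "\<mu> (k - w) / \<mu> (k + min (n - k) w - 1) \<le> \<rho>"
  shows "esym \<mu> n (Suc k) / esym \<mu> n k \<le> (1 + \<rho>) / real (w + 1) * (\<Sum>i\<in>{k..<n}. \<mu> i)"
proof -
  let ?s = "min (n - k) w"
  let ?T = "\<Sum>i\<in>{k..<n}. \<mu> i"
  define b where "b = \<mu> (k + ?s - 1)"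
  have s1: "1 \<le> ?s" and skn: "k + ?s \<le> n" using kn w1 by auto
  have b: "0 < b" unfolding b_def using s1 skn by (intro pos) linarith
  have "real ?s * b = (\<Sum>i\<in>{k..<k + ?s}. b)" by simp
  also have "\<dots> \<le> (\<Sum>i\<in>{k..<k + ?s}. \<mu> i)"
    by (rule sum_mono) (use mono skn s1 in \<open>auto simp: b_def\<close>)
  also have "\<dots> \<le> ?T" using pos skn by (intro sum_mono2) (auto intro: less_imp_le)
  finally have Tb: "real ?s * b \<le> ?T" .
  have rb: "\<mu> (k - w) \<le> \<rho> * b" using rho b unfolding b_def by (simp add: divide_le_eq)
  have "0 < \<mu> (k - w)" using kn by (intro pos) simp
  then have "0 < \<rho> * b" using rb by linarith
  then have rho0: "0 \<le> \<rho>" using b by (simp add: zero_less_mult_iff)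
  have "real ?s * \<mu> (k - w) \<le> real ?s * (\<rho> * b)" using rb by (simp add: mult_left_mono)
  also have "\<dots> = \<rho> * (real ?s * b)" by simp
  also have "\<dots> \<le> \<rho> * ?T" using Tb rho0 by (simp add: mult_left_mono)
  finally have "?T + real ?s * \<mu> (k - w) \<le> (1 + \<rho>) * ?T" by (simp add: algebra_simps)
  moreover have e0: "0 < esym \<mu> n k" using pos kn by (intro esym_pos) auto
  ultimately have "esym \<mu> n k * (?T + real ?s * \<mu> (k - w)) \<le> esym \<mu> n k * ((1 + \<rho>) * ?T)"
    by (intro mult_left_mono) auto
  moreover have "real (w + 1) * esym \<mu> n (Suc k) \<le> esym \<mu> n k * (?T + real ?s * \<mu> (k - w))"
    using pos by (intro esym_Suc_le[OF _ mono kn wk]) (auto intro: less_imp_le)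
  ultimately have "real (w + 1) * esym \<mu> n (Suc k) \<le> esym \<mu> n k * ((1 + \<rho>) * ?T)" by linarith
  then show ?thesis using e0 by (simp add: divide_le_eq field_simps)
qed

lemma bij_betw_pick:
  assumes "finite S"
  shows "bij_betw (pick S) {..<card S} S"
proof (rule bij_betw_imageI)
  show "inj_on (pick S) {..<card S}"
    by (rule strict_mono_on_imp_inj_on) (auto simp: strict_mono_on_def intro: pick_mono_le)
  show "pick S ` {..<card S} = S"
  proof
    show "pick S ` {..<card S} \<subseteq> S" by (auto intro: pick_in_set_le)
    show "S \<subseteq> pick S ` {..<card S}"
    proof
      fix x assume x: "x \<in> S"
      then have "card {a\<in>S. a < x} < card S" using assms by (intro psubset_card_mono) auto
      then show "x \<in> pick S ` {..<card S}" using pick_card_in_set[OF x] by force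
    qed
  qed
qed

lemma bij_betw_pick_insert:
  assumes "finite S" and "j \<notin> S"
  shows "bij_betw (\<lambda>a. if a < card S then pick S a else j) {..<card S + 1} (insert j S)"
proof -
  let ?f = "\<lambda>a. if a < card S then pick S a else j"
  have "bij_betw ?f {..<card S} S"
    using bij_betw_pick[OF assms(1)] by (rule iffD1[OF bij_betw_cong, rotated]) simp
  moreover have "bij_betw ?f {card S} {j}" by simp
  ultimately have "bij_betw ?f ({..<card S} \<union> {card S}) (S \<union> {j})"
    using assms(2) by (intro bij_betw_combine) auto
  moreover have "{..<card S} \<union> {card S} = {..<card S + 1}" by auto
  ultimately show ?thesis by simp
qed

lemma pick_less:
  assumes "S \<subseteq> {..<n}" and "a < card S"
  shows "pick S a < n"
  using assms pick_in_set_le by auto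

lemma cols_sub_carrier:
  assumes "A \<in> carrier_mat m n" and "S \<subseteq> {..<n}"
  shows "cols_sub A S \<in> carrier_mat m (card S)"
proof -
  have "{j. j < n \<and> j \<in> S} = S" and "{i. i < m \<and> i \<in> {..<m}} = {..<m}" using assms(2) by auto
  then show ?thesis using assms(1) unfolding cols_sub_def submatrix_def by auto
qed

lemma cols_sub_index:
  assumes A: "A \<in> carrier_mat m n" and S: "S \<subseteq> {..<n}" and "i < m" and "a < card S"
  shows "cols_sub A S $$ (i, a) = A $$ (i, pick S a)"
proof -
  have "{a\<in>{..<m}. a < i} = {..<i}" using \<open>i < m\<close> by auto
  then have "pick {..<m} i = i" using pick_card_in_set[of i "{..<m}"] \<open>i < m\<close> by simp
  moreover have "{j. j < n \<and> j \<in> S} = S" "{j. j < m \<and> j \<in> {..<m}} = {..<m}" using S by auto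
  then have "submatrix A {..<m} S $$ (i, a) = A $$ (pick {..<m} i, pick S a)"
    using assms by (intro submatrix_index) auto
  moreover have "cols_sub A S = submatrix A {..<m} S" using A by (simp add: cols_sub_def)
  ultimately show ?thesis by simp
qed

definition gram :: "real mat \<Rightarrow> nat \<Rightarrow> nat \<Rightarrow> real" where
  "gram A i j = (transpose_mat A * A) $$ (i, j)"

lemma gram_eq_sum:
  "A \<in> carrier_mat m n \<Longrightarrow> i < n \<Longrightarrow> j < n \<Longrightarrow> gram A i j = (\<Sum>r<m. A $$ (r, i) * A $$ (r, j))"
  unfolding gram_def by (auto simp: scalar_prod_def atLeast0LessThan)

lemma gram_sym: "A \<in> carrier_mat m n \<Longrightarrow> i < n \<Longrightarrow> j < n \<Longrightarrow> gram A i j = gram A j i"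
  by (simp add: gram_eq_sum mult.commute)

lemma transpose_cols_sub_mult_index:
  assumes A: "A \<in> carrier_mat m n" and S: "S \<subseteq> {..<n}" and a: "a < card S" and j: "j < n"
  shows "(transpose_mat (cols_sub A S) * A) $$ (a, j) = gram A (pick S a) j"
proof -
  have "(transpose_mat (cols_sub A S) * A) $$ (a, j) = (\<Sum>r<m. cols_sub A S $$ (r, a) * A $$ (r, j))"
    using cols_sub_carrier[OF A S] A a j by (auto simp: scalar_prod_def atLeast0LessThan)
  also have "\<dots> = gram A (pick S a) j"
    using gram_eq_sum[OF A pick_less[OF S a] j] by (simp add: cols_sub_index[OF A S] a)
  finally show ?thesis .
qed

lemma gram_cols_sub:
  assumes A: "A \<in> carrier_mat m n" and S: "S \<subseteq> {..<n}"
  shows "transpose_mat (cols_sub A S) * cols_sub A S = mat (card S) (card S) (\<lambda>(a, b). gram A (pick S a) (pick S b))"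
proof (rule eq_matI)
  fix a b assume "a < dim_row (mat (card S) (card S) (\<lambda>(a, b). gram A (pick S a) (pick S b)))"
    and "b < dim_col (mat (card S) (card S) (\<lambda>(a, b). gram A (pick S a) (pick S b)))"
  then have a: "a < card S" and b: "b < card S" by auto
  have "(transpose_mat (cols_sub A S) * cols_sub A S) $$ (a, b) = (\<Sum>r<m. A $$ (r, pick S a) * A $$ (r, pick S b))"
    using cols_sub_carrier[OF A S] a b by (auto simp: scalar_prod_def atLeast0LessThan cols_sub_index[OF A S])
  then show "(transpose_mat (cols_sub A S) * cols_sub A S) $$ (a, b) =
      mat (card S) (card S) (\<lambda>(a, b). gram A (pick S a) (pick S b)) $$ (a, b)"
    using a b by (simp add: gram_eq_sum[OF A pick_less[OF S a] pick_less[OF S b]])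
qed (use cols_sub_carrier[OF A S] in auto)

lemma dpp_weight_eq_principal_minor:
  assumes "A \<in> carrier_mat m n" and "S \<subseteq> {..<n}"
  shows "dpp_weight A S = principal_minor (gram A) S"
  unfolding dpp_weight_def gram_cols_sub[OF assms]
  using assms(2) by (intro principal_minor_mat_reindex bij_betw_pick) (rule finite_subset, auto)

lemma det_gram_eq_principal_minor:
  assumes "A \<in> carrier_mat m n"
  shows "det (transpose_mat A * A) = principal_minor (gram A) {..<n}"
proof -
  have "transpose_mat A * A = mat n n (\<lambda>(a, b). gram A (id a) (id b))"
    by (rule eq_matI) (use assms in \<open>auto simp: gram_def\<close>)
  then show ?thesis using principal_minor_mat_reindex[of id n "{..<n}" "gram A"] by simp
qed

lemma mat_eq_of_mult_vec_eq:
  fixes A B :: "'a :: comm_ring_1 mat"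
  assumes A: "A \<in> carrier_mat nr nc" and B: "B \<in> carrier_mat nr nc"
    and eq: "\<And>v. v \<in> carrier_vec nc \<Longrightarrow> A *\<^sub>v v = B *\<^sub>v v"
  shows "A = B"
proof (rule eq_matI)
  fix i j assume i: "i < dim_row B" and j: "j < dim_col B"
  have "(A *\<^sub>v unit_vec nc j) $ i = (B *\<^sub>v unit_vec nc j) $ i" using eq[of "unit_vec nc j"] by simp
  then show "A $$ (i, j) = B $$ (i, j)"
    using A B i j by (simp add: scalar_prod_def row_def unit_vec_def sum.delta' atLeast0LessThan if_distrib cong: if_cong)
qed (use A B in auto)

lemma orth_proj_unique:
  fixes P Q :: "real mat"
  assumes P: "P \<in> carrier_mat m m" and Q: "Q \<in> carrier_mat m m"
    and PP: "P * P = P" and QQ: "Q * Q = Q"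
    and Pt: "transpose_mat P = P" and Qt: "transpose_mat Q = Q"
    and range: "{P *\<^sub>v v | v. v \<in> carrier_vec m} = {Q *\<^sub>v v | v. v \<in> carrier_vec m}"
  shows "P = Q"
proof -
  have absorb: "Y * X = X" if X: "X \<in> carrier_mat m m" and Y: "Y \<in> carrier_mat m m" and YY: "Y * Y = Y"
    and XY: "{X *\<^sub>v v | v. v \<in> carrier_vec m} \<subseteq> {Y *\<^sub>v v | v. v \<in> carrier_vec m}" for X Y :: "real mat"
  proof (rule mat_eq_of_mult_vec_eq[of _ m m])
    fix v :: "real vec" assume v: "v \<in> carrier_vec m"
    then obtain w where w: "w \<in> carrier_vec m" "X *\<^sub>v v = Y *\<^sub>v w" using XY by blast
    have "(Y * X) *\<^sub>v v = (Y * Y) *\<^sub>v w" using X Y v w by (simp add: assoc_mult_mat_vec)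
    then show "(Y * X) *\<^sub>v v = X *\<^sub>v v" using YY w by simp
  qed (use X Y in auto)
  have "P = transpose_mat (Q * P)" using absorb[OF P Q QQ] range Pt by simp
  also have "\<dots> = P * Q" using P Q Pt Qt by (simp add: transpose_mult)
  also have "\<dots> = Q" using absorb[OF Q P PP] range by simp
  finally show ?thesis .
qed

lemma orth_proj_eqI:
  fixes P :: "real mat"
  assumes "P \<in> carrier_mat m m" and "P * P = P" and "transpose_mat P = P"
    and "{P *\<^sub>v v | v. v \<in> carrier_vec m} = V"
  shows "orth_proj m V = P"
  unfolding orth_proj_def
proof (rule the_equality)
  fix Q assume "Q \<in> carrier_mat m m \<and> Q * Q = Q \<and> transpose_mat Q = Q \<and> {Q *\<^sub>v v | v. v \<in> carrier_vec m} = V"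
  then show "Q = P" using orth_proj_unique[of Q m P] assms by auto
qed (use assms in auto)

lemma inverse_of_symmetric_symmetric:
  fixes G Gi :: "'a :: comm_ring_1 mat"
  assumes G: "G \<in> carrier_mat k k" and Gi: "Gi \<in> carrier_mat k k"
    and Gt: "transpose_mat G = G" and inv1: "Gi * G = 1\<^sub>m k" and inv2: "G * Gi = 1\<^sub>m k"
  shows "transpose_mat Gi = Gi"
proof -
  have "transpose_mat Gi * G = transpose_mat (G * Gi)" using G Gi Gt by (simp add: transpose_mult)
  then have "transpose_mat Gi * G = 1\<^sub>m k" using inv2 by simp
  then have "transpose_mat Gi * G * Gi = Gi" using Gi by simp
  moreover have "transpose_mat Gi * G * Gi = transpose_mat Gi" using G Gi inv2 by (simp add: assoc_mult_mat[of _ k k])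
  ultimately show ?thesis by simp
qed

lemma range_mult_vec_eq_of_mult_eq:
  fixes B C :: "'a :: comm_ring_1 mat"
  assumes B: "B \<in> carrier_mat m k" and C: "C \<in> carrier_mat k m" and BCB: "B * C * B = B"
  shows "{(B * C) *\<^sub>v v | v. v \<in> carrier_vec m} = {B *\<^sub>v x | x. x \<in> carrier_vec k}"
proof (intro subset_antisym subsetI)
  fix y assume "y \<in> {(B * C) *\<^sub>v v | v. v \<in> carrier_vec m}"
  then obtain v where "v \<in> carrier_vec m" "y = B *\<^sub>v (C *\<^sub>v v)" using B C by auto
  moreover have "C *\<^sub>v v \<in> carrier_vec k" using C \<open>v \<in> carrier_vec m\<close> by simp
  ultimately show "y \<in> {B *\<^sub>v x | x. x \<in> carrier_vec k}" by blast
next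
  fix y assume "y \<in> {B *\<^sub>v x | x. x \<in> carrier_vec k}"
  then obtain x where x: "x \<in> carrier_vec k" "y = B *\<^sub>v x" by blast
  then have "y = (B * C) *\<^sub>v (B *\<^sub>v x)"
    using B C BCB by (metis assoc_mult_mat_vec mult_carrier_mat)
  moreover have "B *\<^sub>v x \<in> carrier_vec m" using B x by simp
  ultimately show "y \<in> {(B * C) *\<^sub>v v | v. v \<in> carrier_vec m}" by blast
qed

lemma gram_inverse_projection:
  fixes B Gi :: "real mat"
  assumes B: "B \<in> carrier_mat m k" and Gi: "Gi \<in> carrier_mat k k"
    and inv1: "Gi * (transpose_mat B * B) = 1\<^sub>m k" and inv2: "(transpose_mat B * B) * Gi = 1\<^sub>m k"
  defines "P \<equiv> B * Gi * transpose_mat B"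
  shows "P \<in> carrier_mat m m" and "P * B = B" and "P * P = P" and "transpose_mat P = P"
    and "{P *\<^sub>v v | v. v \<in> carrier_vec m} = {B *\<^sub>v x | x. x \<in> carrier_vec k}"
proof -
  have Bt: "transpose_mat B \<in> carrier_mat k m" using B by simp
  have BGi: "B * Gi \<in> carrier_mat m k" using B Gi by simp
  show P: "P \<in> carrier_mat m m" unfolding P_def using B Gi by simp
  show PB: "P * B = B"
  proof -
    have "P * B = (B * Gi) * (transpose_mat B * B)"
      unfolding P_def using assoc_mult_mat[OF BGi Bt B] by simp
    also have "\<dots> = B * (Gi * (transpose_mat B * B))" using B Gi by (simp add: assoc_mult_mat[of _ m k _ k _ k])
    finally show ?thesis using inv1 B by simp
  qed
  show "P * P = P"
  proof -
    have "P * P = P * (B * Gi) * transpose_mat B"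
      using assoc_mult_mat[OF P BGi Bt] unfolding P_def by simp
    also have "P * (B * Gi) = (P * B) * Gi" using assoc_mult_mat[OF P B Gi] by simp
    also have "(P * B) * Gi * transpose_mat B = P" by (subst PB) (simp add: P_def)
    finally show ?thesis .
  qed
  have Git: "transpose_mat Gi = Gi"
    using inverse_of_symmetric_symmetric[OF _ Gi _ inv1 inv2] B by (simp add: transpose_mult)
  have "transpose_mat P = transpose_mat (transpose_mat B) * transpose_mat (B * Gi)"
    unfolding P_def by (rule transpose_mult[OF BGi Bt])
  also have "transpose_mat (B * Gi) = transpose_mat Gi * transpose_mat B" by (rule transpose_mult[OF B Gi])
  also have "transpose_mat (transpose_mat B) * (transpose_mat Gi * transpose_mat B) = P"
    unfolding Git P_def using assoc_mult_mat[OF B Gi Bt] by simp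
  finally show "transpose_mat P = P" .
  show "{P *\<^sub>v v | v. v \<in> carrier_vec m} = {B *\<^sub>v x | x. x \<in> carrier_vec k}"
  proof -
    have BC: "P = B * (Gi * transpose_mat B)" unfolding P_def by (rule assoc_mult_mat[OF B Gi Bt])
    show ?thesis unfolding BC by (rule range_mult_vec_eq_of_mult_eq[OF B]) (use Gi Bt PB BC in auto)
  qed
qed

lemma proj_S_eq:
  assumes A: "A \<in> carrier_mat m n" and S: "S \<subseteq> {..<n}"
    and Gi: "Gi \<in> carrier_mat (card S) (card S)"
    and inv1: "Gi * (transpose_mat (cols_sub A S) * cols_sub A S) = 1\<^sub>m (card S)"
    and inv2: "(transpose_mat (cols_sub A S) * cols_sub A S) * Gi = 1\<^sub>m (card S)"
  shows "proj_S A S = cols_sub A S * Gi * transpose_mat (cols_sub A S)"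
proof -
  note proj = gram_inverse_projection[OF cols_sub_carrier[OF A S] Gi inv1 inv2]
  have "dim_col (cols_sub A S) = card S" using cols_sub_carrier[OF A S] by simp
  then have "{cols_sub A S * Gi * transpose_mat (cols_sub A S) *\<^sub>v v | v. v \<in> carrier_vec m} = col_span A S"
    unfolding col_span_def using proj(5) by simp
  then show ?thesis
    unfolding proj_S_def using A proj(1,3,4) by (simp add: orth_proj_eqI)
qed

lemma frob_sq_eq_sum_diag:
  assumes "W \<in> carrier_mat m n"
  shows "frob_sq W = (\<Sum>j<n. (transpose_mat W * W) $$ (j, j))"
proof -
  have "frob_sq W = (\<Sum>j<n. \<Sum>i<m. W $$ (i, j) * W $$ (i, j))"
    unfolding frob_sq_def using assms by (simp add: power2_eq_square sum.swap[of _ "{..<m}"])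
  also have "\<dots> = (\<Sum>j<n. (transpose_mat W * W) $$ (j, j))"
    using assms by (intro sum.cong) (auto simp: scalar_prod_def atLeast0LessThan)
  finally show ?thesis .
qed

lemma residual_gram:
  fixes A P :: "real mat"
  assumes A: "A \<in> carrier_mat m n" and P: "P \<in> carrier_mat m m"
    and PP: "P * P = P" and Pt: "transpose_mat P = P"
  shows "transpose_mat (A - P * A) * (A - P * A) = transpose_mat A * A - transpose_mat A * (P * A)"
proof -
  have At: "transpose_mat A \<in> carrier_mat n m" and PA: "P * A \<in> carrier_mat m n" using A P by auto
  have AtP: "transpose_mat A * P \<in> carrier_mat n m" using A P by simp
  have "transpose_mat (A - P * A) = transpose_mat A - transpose_mat A * P"
    using A P Pt by (simp add: transpose_minus transpose_mult)
  moreover have "(transpose_mat A * P) * (P * A) = transpose_mat A * (P * A)"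
    using At P PA PP by (simp add: assoc_mult_mat[of _ n m _ m _ n] assoc_mult_mat[of P m m P m A n, symmetric])
  moreover have "(transpose_mat A * P) * A = transpose_mat A * (P * A)"
    using At P A by (simp add: assoc_mult_mat)
  moreover have "transpose_mat A - transpose_mat A * P \<in> carrier_mat n m" by (rule minus_carrier_mat[OF AtP])
  ultimately have "transpose_mat (A - P * A) * (A - P * A) =
      (transpose_mat A * A - transpose_mat A * (P * A)) - (transpose_mat A * (P * A) - transpose_mat A * (P * A))"
    using mult_minus_distrib_mat[of _ n m A n "P * A"] minus_mult_distrib_mat[OF At AtP A]
      minus_mult_distrib_mat[OF At AtP PA] A PA by simp
  also have "\<dots> = transpose_mat A * A - transpose_mat A * (P * A)"
    by (rule eq_matI) (use At A PA in auto)
  finally show ?thesis .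
qed

text \<open>For \<open>Gi = (A\<^sub>S\<^sup>T A\<^sub>S)\<^sup>-\<^sup>1\<close> this is \<open>\<parallel>P\<^sub>S a\<^sub>j\<parallel>\<^sup>2 = c\<^sup>T Gi c\<close> with \<open>c = A\<^sub>S\<^sup>T a\<^sub>j\<close>.\<close>

definition proj_sq_norm :: "real mat \<Rightarrow> nat set \<Rightarrow> real mat \<Rightarrow> nat \<Rightarrow> real" where
  "proj_sq_norm A S Gi j =
    (\<Sum>a<card S. gram A (pick S a) j * (\<Sum>b<card S. Gi $$ (a, b) * gram A (pick S b) j))"

lemma Er_eq_sum_proj_sq_norm:
  assumes A: "A \<in> carrier_mat m n" and S: "S \<subseteq> {..<n}"
    and Gi: "Gi \<in> carrier_mat (card S) (card S)"
    and inv1: "Gi * (transpose_mat (cols_sub A S) * cols_sub A S) = 1\<^sub>m (card S)"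
    and inv2: "(transpose_mat (cols_sub A S) * cols_sub A S) * Gi = 1\<^sub>m (card S)"
  shows "Er A S = (\<Sum>j<n. gram A j j - proj_sq_norm A S Gi j)"
proof -
  let ?k = "card S"
  define B where "B = cols_sub A S"
  define P where "P = B * Gi * transpose_mat B"
  define C where "C = transpose_mat B * A"
  have B: "B \<in> carrier_mat m ?k" unfolding B_def by (rule cols_sub_carrier[OF A S])
  have C: "C \<in> carrier_mat ?k n" unfolding C_def using B A by simp
  note proj = gram_inverse_projection[OF B Gi inv1[folded B_def] inv2[folded B_def], folded P_def]
  have PA: "P * A = B * (Gi * C)"
    unfolding P_def C_def using B Gi A by (simp add: assoc_mult_mat[of _ m ?k _ ?k _ m] assoc_mult_mat[of _ m ?k _ m _ n])
  have "transpose_mat A * (P * A) = transpose_mat C * (Gi * C)"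
    unfolding PA C_def using A B Gi by (simp add: transpose_mult assoc_mult_mat[of _ n m _ ?k _ n])
  moreover have "(transpose_mat C * (Gi * C)) $$ (j, j) = proj_sq_norm A S Gi j" if j: "j < n" for j
  proof -
    have "(transpose_mat C * (Gi * C)) $$ (j, j) = (\<Sum>a<?k. C $$ (a, j) * (\<Sum>b<?k. Gi $$ (a, b) * C $$ (b, j)))"
      using C Gi j by (auto simp: scalar_prod_def atLeast0LessThan)
    then show ?thesis unfolding proj_sq_norm_def C_def B_def
      using transpose_cols_sub_mult_index[OF A S _ j] by simp
  qed
  ultimately have diag: "(transpose_mat A * (P * A)) $$ (j, j) = proj_sq_norm A S Gi j" if "j < n" for j
    using that by simp
  have "Er A S = frob_sq (A - P * A)"
    unfolding Er_def proj_S_eq[OF A S Gi inv1 inv2] P_def B_def ..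
  also have "\<dots> = (\<Sum>j<n. (transpose_mat (A - P * A) * (A - P * A)) $$ (j, j))"
    by (rule frob_sq_eq_sum_diag) (use A proj(1) in auto)
  also have "\<dots> = (\<Sum>j<n. (transpose_mat A * A - transpose_mat A * (P * A)) $$ (j, j))"
    by (simp only: residual_gram[OF A proj(1,3,4)])
  also have "\<dots> = (\<Sum>j<n. gram A j j - proj_sq_norm A S Gi j)"
    using A proj(1) diag by (intro sum.cong) (auto simp: gram_def)
  finally show ?thesis .
qed

lemma det_unit_upper_block:
  fixes v :: "'a :: comm_ring_1 mat"
  assumes "v \<in> carrier_mat k 1"
  shows "det (four_block_mat (1\<^sub>m k) v (0\<^sub>m 1 k) (1\<^sub>m 1)) = 1"
proof -
  let ?E = "four_block_mat (1\<^sub>m k) v (0\<^sub>m 1 k) (1\<^sub>m 1)"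
  have E: "?E \<in> carrier_mat (k + 1) (k + 1)" using assms by (intro four_block_carrier_mat) auto
  have "upper_triangular ?E" unfolding upper_triangular_def using assms by auto
  then have "det ?E = (\<Prod>i = 0..<k + 1. ?E $$ (i, i))"
    using E by (simp add: det_upper_triangular prod_list_diag_prod)
  also have "\<dots> = 1" using assms by (intro prod.neutral) auto
  finally show ?thesis .
qed

lemma det_four_block_schur_col:
  fixes G :: "'a :: comm_ring_1 mat"
  assumes G: "G \<in> carrier_mat k k" and Gi: "Gi \<in> carrier_mat k k" and inv: "G * Gi = 1\<^sub>m k"
    and c: "c \<in> carrier_mat k 1" and r: "r \<in> carrier_mat 1 k" and d: "d \<in> carrier_mat 1 1"
  shows "det (four_block_mat G c r d) = det G * (d $$ (0, 0) - (r * (Gi * c)) $$ (0, 0))"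
proof -
  define v where "v = - (Gi * c)"
  define E where "E = four_block_mat (1\<^sub>m k) v (0\<^sub>m 1 k) (1\<^sub>m 1)"
  define schur where "schur = r * v + d"
  have v: "v \<in> carrier_mat k 1" unfolding v_def using Gi c by simp
  have schur: "schur \<in> carrier_mat 1 1" unfolding schur_def using r v d by simp
  have X: "four_block_mat G c r d \<in> carrier_mat (k + 1) (k + 1)" using G c r d by auto
  have E: "E \<in> carrier_mat (k + 1) (k + 1)" unfolding E_def using v by auto
  have "G * (Gi * c) = c" using assoc_mult_mat[OF G Gi c] inv c by simp
  then have "G * v + c = 0\<^sub>m k 1" unfolding v_def using G Gi c by simp
  moreover have "four_block_mat G c r d * E = four_block_mat (G * 1\<^sub>m k + c * 0\<^sub>m 1 k) (G * v + c * 1\<^sub>m 1)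
      (r * 1\<^sub>m k + d * 0\<^sub>m 1 k) (r * v + d * 1\<^sub>m 1)"
    unfolding E_def by (rule mult_four_block_mat[OF G c r d]) (use v in auto)
  ultimately have XE: "four_block_mat G c r d * E = four_block_mat G (0\<^sub>m k 1) r schur"
    unfolding schur_def using G c r d v by simp
  have "det (four_block_mat G c r d) = det (four_block_mat G c r d * E)"
    using det_mult[OF X E] det_unit_upper_block[OF v] unfolding E_def by simp
  also have "\<dots> = det G * schur $$ (0, 0)"
    unfolding XE by (simp only: det_four_block_mat_upper_right_zero_col[OF G refl r schur] det_single[OF schur])
  also have "schur $$ (0, 0) = d $$ (0, 0) - (r * (Gi * c)) $$ (0, 0)"
    unfolding schur_def v_def using r c Gi d by simp
  finally show ?thesis .
qed

text \<open>Bordering the Gram matrix of \<open>A\<^sub>S\<close> by the column \<open>j\<close> multiplies its determinant by the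
  squared distance of \<open>a\<^sub>j\<close> from the span of \<open>A\<^sub>S\<close>.\<close>

lemma det_bordered_gram:
  assumes A: "A \<in> carrier_mat m n" and S: "S \<subseteq> {..<n}"
    and Gi: "Gi \<in> carrier_mat (card S) (card S)"
    and inv2: "(transpose_mat (cols_sub A S) * cols_sub A S) * Gi = 1\<^sub>m (card S)"
    and j: "j < n"
  shows "det (mat (card S + 1) (card S + 1) (\<lambda>(a, b).
      gram A (if a < card S then pick S a else j) (if b < card S then pick S b else j)))
    = dpp_weight A S * (gram A j j - proj_sq_norm A S Gi j)"
proof -
  let ?k = "card S"
  define GS where "GS = mat ?k ?k (\<lambda>(a, b). gram A (pick S a) (pick S b))"
  define c where "c = mat ?k 1 (\<lambda>(a, b). gram A (pick S a) j)"
  define r where "r = mat 1 ?k (\<lambda>(a, b). gram A j (pick S b))"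
  define d where "d = mat 1 1 (\<lambda>_. gram A j j)"
  have GS_eq: "transpose_mat (cols_sub A S) * cols_sub A S = GS"
    unfolding GS_def by (rule gram_cols_sub[OF A S])
  have "mat (?k + 1) (?k + 1) (\<lambda>(a, b).
      gram A (if a < ?k then pick S a else j) (if b < ?k then pick S b else j)) = four_block_mat GS c r d"
    unfolding GS_def c_def r_def d_def by (rule eq_matI) auto
  moreover have "det (four_block_mat GS c r d) = det GS * (d $$ (0, 0) - (r * (Gi * c)) $$ (0, 0))"
    using inv2 Gi unfolding GS_eq by (intro det_four_block_schur_col) (auto simp: GS_def c_def r_def d_def)
  moreover have "(r * (Gi * c)) $$ (0, 0) = proj_sq_norm A S Gi j"
  proof -
    have "(r * (Gi * c)) $$ (0, 0) = (\<Sum>a<?k. gram A j (pick S a) * (\<Sum>b<?k. Gi $$ (a, b) * gram A (pick S b) j))"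
      unfolding r_def c_def using Gi by (auto simp: scalar_prod_def atLeast0LessThan)
    then show ?thesis unfolding proj_sq_norm_def using gram_sym[OF A _ j] pick_less[OF S] by simp
  qed
  moreover have "det GS = dpp_weight A S" unfolding dpp_weight_def GS_eq ..
  ultimately show ?thesis unfolding d_def by simp
qed

lemma obtain_inverse_mat:
  fixes M :: "'a :: field mat"
  assumes "M \<in> carrier_mat k k" and "det M \<noteq> 0"
  obtains Gi where "Gi \<in> carrier_mat k k" "Gi * M = 1\<^sub>m k" "M * Gi = 1\<^sub>m k"
  using det_non_zero_imp_unit[OF assms, of undefined] that unfolding Units_def ring_mat_def by auto

text \<open>Adding a column \<open>j \<in> S\<close> again gives a singular bordered Gram matrix (two equal rows);
  for \<open>j \<notin> S\<close> it is the principal minor of \<open>S \<union> {j}\<close>.\<close>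

lemma dpp_weight_mult_Er:
  assumes A: "A \<in> carrier_mat m n" and S: "S \<subseteq> {..<n}" and w: "dpp_weight A S \<noteq> 0"
  shows "dpp_weight A S * Er A S = (\<Sum>j\<in>{..<n} - S. principal_minor (gram A) (insert j S))"
proof -
  let ?k = "card S"
  let ?GS = "transpose_mat (cols_sub A S) * cols_sub A S"
  let ?f = "\<lambda>j a. if a < ?k then pick S a else j"
  define X where "X = (\<lambda>j. mat (?k + 1) (?k + 1) (\<lambda>(a, b). gram A (?f j a) (?f j b)))"
  have fS: "finite S" using S finite_subset by blast
  obtain Gi where Gi: "Gi \<in> carrier_mat ?k ?k" and inv1: "Gi * ?GS = 1\<^sub>m ?k" and inv2: "?GS * Gi = 1\<^sub>m ?k"
    using obtain_inverse_mat[of ?GS ?k] cols_sub_carrier[OF A S] w unfolding dpp_weight_def by auto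
  have "dpp_weight A S * Er A S = (\<Sum>j<n. dpp_weight A S * (gram A j j - proj_sq_norm A S Gi j))"
    unfolding Er_eq_sum_proj_sq_norm[OF A S Gi inv1 inv2] by (simp add: sum_distrib_left)
  also have "\<dots> = (\<Sum>j<n. det (X j))"
    unfolding X_def using det_bordered_gram[OF A S Gi inv2] by simp
  also have "\<dots> = (\<Sum>j\<in>{..<n} - S. det (X j)) + (\<Sum>j\<in>S. det (X j))"
    by (rule sum.subset_diff[OF S]) simp
  also have "(\<Sum>j\<in>S. det (X j)) = 0"
  proof (intro sum.neutral ballI)
    fix j assume j: "j \<in> S"
    define a where "a = card {i\<in>S. i < j}"
    have "a < ?k" unfolding a_def using j fS by (intro psubset_card_mono) auto
    moreover have "pick S a = j" unfolding a_def by (rule pick_card_in_set[OF j])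
    ultimately have "row (X j) a = row (X j) ?k" by (intro eq_vecI) (auto simp: X_def)
    then show "det (X j) = 0"
      using \<open>a < ?k\<close> by (intro det_identical_rows[of _ "?k + 1" a ?k]) (auto simp: X_def)
  qed
  also have "(\<Sum>j\<in>{..<n} - S. det (X j)) = (\<Sum>j\<in>{..<n} - S. principal_minor (gram A) (insert j S))"
    unfolding X_def using fS by (intro sum.cong refl principal_minor_mat_reindex bij_betw_pick_insert) auto
  finally show ?thesis by simp
qed

lemma det_gram_eq_0_imp_kernel:
  fixes B :: "real mat"
  assumes B: "B \<in> carrier_mat m k" and "det (transpose_mat B * B) = 0"
  obtains v where "v \<in> carrier_vec k" "v \<noteq> 0\<^sub>v k" "B *\<^sub>v v = 0\<^sub>v m"
proof -
  have "transpose_mat B * B \<in> carrier_mat k k" using B by simp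
  then obtain v where v: "v \<in> carrier_vec k" "v \<noteq> 0\<^sub>v k" "(transpose_mat B * B) *\<^sub>v v = 0\<^sub>v k"
    using assms(2) det_0_iff_vec_prod_zero_field by blast
  have Bv: "B *\<^sub>v v \<in> carrier_vec m" using B v by simp
  have "(B *\<^sub>v v) \<bullet>c (B *\<^sub>v v) = (B *\<^sub>v v) \<bullet> (B *\<^sub>v v)" by (simp add: scalar_prod_def)
  also have "\<dots> = (transpose_mat B *\<^sub>v (B *\<^sub>v v)) \<bullet> v"
    using transpose_vec_mult_scalar[OF B v(1) Bv] by simp
  also have "transpose_mat B *\<^sub>v (B *\<^sub>v v) = (transpose_mat B * B) *\<^sub>v v"
    using B v by (simp add: assoc_mult_mat_vec)
  also have "\<dots> \<bullet> v = 0" using v by simp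
  finally have "B *\<^sub>v v = 0\<^sub>v m" using conjugate_square_eq_0_vec[OF Bv] by simp
  then show ?thesis using that v by blast
qed

definition col_selection_mat :: "nat \<Rightarrow> nat set \<Rightarrow> real mat" where
  "col_selection_mat n S = mat n (card S) (\<lambda>(i, a). if i = pick S a then 1 else 0)"

lemma col_selection_mat_carrier: "col_selection_mat n S \<in> carrier_mat n (card S)"
  unfolding col_selection_mat_def by simp

lemma cols_sub_eq_mult_col_selection_mat:
  assumes A: "A \<in> carrier_mat m n" and S: "S \<subseteq> {..<n}"
  shows "cols_sub A S = A * col_selection_mat n S"
proof (rule eq_matI)
  fix r a assume "r < dim_row (A * col_selection_mat n S)" and "a < dim_col (A * col_selection_mat n S)"
  then have r: "r < m" and a: "a < card S" using A by (auto simp: col_selection_mat_def)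
  have "(A * col_selection_mat n S) $$ (r, a) = (\<Sum>i<n. A $$ (r, i) * (if i = pick S a then 1 else 0))"
    using A r a by (auto simp: scalar_prod_def atLeast0LessThan col_selection_mat_def)
  also have "\<dots> = A $$ (r, pick S a)"
    using pick_less[OF S a] by (simp add: if_distrib sum.delta' cong: if_cong)
  finally show "cols_sub A S $$ (r, a) = (A * col_selection_mat n S) $$ (r, a)"
    using cols_sub_index[OF A S r a] by simp
qed (use A cols_sub_carrier[OF A S] in \<open>auto simp: col_selection_mat_def\<close>)

lemma col_selection_mat_mult_vec_pick:
  assumes S: "S \<subseteq> {..<n}" and v: "v \<in> carrier_vec (card S)" and a: "a < card S"
  shows "(col_selection_mat n S *\<^sub>v v) $ pick S a = v $ a"
proof -
  have pick_inj: "pick S a = pick S b \<longleftrightarrow> a = b" if "b < card S" for b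
    using inj_onD[OF bij_betw_imp_inj_on[OF bij_betw_pick[OF finite_subset[OF S]]]] a that by auto
  have "(col_selection_mat n S *\<^sub>v v) $ pick S a = (\<Sum>b<card S. (if a = b then 1 else 0) * v $ b)"
    using v a pick_less[OF S a] pick_inj
    by (auto simp: scalar_prod_def atLeast0LessThan col_selection_mat_def intro!: sum.cong)
  also have "\<dots> = (\<Sum>b<card S. if b = a then v $ b else 0)" by (intro sum.cong) auto
  finally show ?thesis using a by simp
qed

text \<open>A kernel vector of \<open>A\<^sub>S\<close>, padded by zeros, is a kernel vector of \<open>A\<close>.\<close>

lemma dpp_weight_nonzero:
  assumes A: "A \<in> carrier_mat m n" and S: "S \<subseteq> {..<n}"
    and det: "det (transpose_mat A * A) \<noteq> 0"
  shows "dpp_weight A S \<noteq> 0"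
proof
  assume "dpp_weight A S = 0"
  then obtain v where v: "v \<in> carrier_vec (card S)" "v \<noteq> 0\<^sub>v (card S)" and Bv: "cols_sub A S *\<^sub>v v = 0\<^sub>v m"
    using det_gram_eq_0_imp_kernel[OF cols_sub_carrier[OF A S]] unfolding dpp_weight_def by blast
  define u where "u = col_selection_mat n S *\<^sub>v v"
  have u: "u \<in> carrier_vec n" unfolding u_def using col_selection_mat_carrier v(1) by (rule mult_mat_vec_carrier)
  have "u \<noteq> 0\<^sub>v n"
  proof
    assume "u = 0\<^sub>v n"
    then have "v = 0\<^sub>v (card S)"
      using col_selection_mat_mult_vec_pick[OF S v(1)] v pick_less[OF S] unfolding u_def by (intro eq_vecI) auto
    with v(2) show False by contradiction
  qed
  moreover have "(transpose_mat A * A) *\<^sub>v u = 0\<^sub>v n"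
  proof -
    have "A *\<^sub>v u = 0\<^sub>v m"
      using A v Bv col_selection_mat_carrier[of n S] unfolding u_def cols_sub_eq_mult_col_selection_mat[OF A S] by simp
    then have "(transpose_mat A * A) *\<^sub>v u = transpose_mat A *\<^sub>v 0\<^sub>v m" using A u by simp
    also have "\<dots> = 0\<^sub>v n" using A by (intro eq_vecI) auto
    finally show ?thesis .
  qed
  ultimately have "det (transpose_mat A * A) = 0"
    using u A det_0_iff_vec_prod_zero_field[of "transpose_mat A * A" n] by auto
  with det show False by contradiction
qed

lemma kDPP_expect_Er_eq:
  assumes A: "A \<in> carrier_mat m n"
    and ev: "mset (map lam [1..<n+1]) = proots (char_poly (transpose_mat A * A))"
    and pos: "\<And>i. 1 \<le> i \<Longrightarrow> i \<le> n \<Longrightarrow> 0 < lam i"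
    and kn: "k < n"
  shows "kDPP_expect A k (Er A) =
    real (Suc k) * esym (\<lambda>i. lam (Suc i)) n (Suc k) / esym (\<lambda>i. lam (Suc i)) n k"
proof -
  let ?\<mu> = "\<lambda>i. lam (Suc i)"
  have minors: "(\<Sum>X\<in>ksubsets n j. principal_minor (gram A) X) = esym ?\<mu> n j" if "j \<le> n" for j
    using sum_principal_minors_eq_esym[OF _ ev that] A unfolding gram_def by simp
  have "det (transpose_mat A * A) = esym ?\<mu> n n"
    using minors[of n] unfolding det_gram_eq_principal_minor[OF A] ksubsets_self by simp
  then have "det (transpose_mat A * A) \<noteq> 0" using esym_pos[of n ?\<mu> n] pos by simp
  then have weight: "dpp_weight A S \<noteq> 0" if "S \<in> ksubsets n k" for S
    using dpp_weight_nonzero[OF A] ksubsetsD(1)[OF that] by blast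
  have "(\<Sum>S\<in>ksubsets n k. dpp_weight A S) = esym ?\<mu> n k"
    using minors[of k] kn dpp_weight_eq_principal_minor[OF A] ksubsetsD(1) by (simp cong: sum.cong)
  moreover have "(\<Sum>S\<in>ksubsets n k. dpp_weight A S * Er A S) = real (Suc k) * esym ?\<mu> n (Suc k)"
  proof -
    have "(\<Sum>S\<in>ksubsets n k. dpp_weight A S * Er A S) =
        (\<Sum>S\<in>ksubsets n k. \<Sum>j\<in>{..<n} - S. principal_minor (gram A) (insert j S))"
      using dpp_weight_mult_Er[OF A] weight ksubsetsD(1) by (simp cong: sum.cong)
    also have "\<dots> = (\<Sum>T\<in>ksubsets n (Suc k). \<Sum>i\<in>T. principal_minor (gram A) T)"
      by (rule sum_ksubsets_insert)
    also have "\<dots> = (\<Sum>T\<in>ksubsets n (Suc k). real (Suc k) * principal_minor (gram A) T)"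
      by (intro sum.cong refl) (simp add: ksubsetsD(3))
    also have "\<dots> = real (Suc k) * esym ?\<mu> n (Suc k)"
      using minors[of "Suc k"] kn by (simp add: sum_distrib_left[symmetric])
    finally show ?thesis .
  qed
  ultimately show ?thesis unfolding kDPP_expect_def using A by simp
qed

lemma OPT_eq_sum:
  assumes "A \<in> carrier_mat m n"
  shows "OPT A lam k = (\<Sum>i\<in>{k..<n}. lam (Suc i))"
proof -
  have "(\<Sum>i\<in>{k..<n}. lam (Suc i)) = (\<Sum>i\<in>Suc ` {k..<n}. lam i)" by (subst sum.reindex) auto
  also have "Suc ` {k..<n} = {k<..n}" by (auto simp: image_Suc_atLeastLessThan)
  finally show ?thesis unfolding OPT_def using assms by simp
qed

lemma kDPP_Er_ratio_eq:
  assumes A: "A \<in> carrier_mat m n" and sorted: "is_sorted_eigs A lam"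
    and pos: "\<And>i. i \<in> {1..n} \<Longrightarrow> 0 < lam i" and kn: "k < n"
  defines "\<mu> \<equiv> \<lambda>i. lam (Suc i)"
  shows "kDPP_expect A k (Er A) / OPT A lam k =
      real (Suc k) * (esym \<mu> n (Suc k) / esym \<mu> n k / (\<Sum>i\<in>{k..<n}. \<mu> i))"
    and "\<And>i. i < n \<Longrightarrow> 0 < \<mu> i"
    and "\<And>i j. i \<le> j \<Longrightarrow> j < n \<Longrightarrow> \<mu> j \<le> \<mu> i"
    and "0 < (\<Sum>i\<in>{k..<n}. \<mu> i)"
proof -
  have ev: "mset (map lam [1..<n+1]) = proots (char_poly (transpose_mat A * A))"
    and mono: "\<And>i j. 1 \<le> i \<Longrightarrow> i \<le> j \<Longrightarrow> j \<le> n \<Longrightarrow> lam j \<le> lam i"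
    using sorted A unfolding is_sorted_eigs_def by auto
  have "kDPP_expect A k (Er A) = real (Suc k) * esym \<mu> n (Suc k) / esym \<mu> n k"
    unfolding \<mu>_def by (rule kDPP_expect_Er_eq[OF A ev _ kn]) (use pos in auto)
  then show "kDPP_expect A k (Er A) / OPT A lam k =
      real (Suc k) * (esym \<mu> n (Suc k) / esym \<mu> n k / (\<Sum>i\<in>{k..<n}. \<mu> i))"
    unfolding OPT_eq_sum[OF A] \<mu>_def by simp
  show \<mu>_pos: "\<And>i. i < n \<Longrightarrow> 0 < \<mu> i" unfolding \<mu>_def using pos by simp
  show "\<And>i j. i \<le> j \<Longrightarrow> j < n \<Longrightarrow> \<mu> j \<le> \<mu> i" unfolding \<mu>_def using mono by simp
  show "0 < (\<Sum>i\<in>{k..<n}. \<mu> i)" using \<mu>_pos kn by (intro sum_pos) auto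
qed

lemma kDPP_Er_ratio_le:
  assumes "A \<in> carrier_mat m n" and "is_sorted_eigs A lam"
    and "\<And>i. i \<in> {1..n} \<Longrightarrow> 0 < lam i" and "k < n"
  shows "kDPP_expect A k (Er A) / OPT A lam k \<le> real (Suc k)"
proof -
  note ratio = kDPP_Er_ratio_eq[OF assms]
  let ?\<mu> = "\<lambda>i. lam (Suc i)"
  have "esym ?\<mu> n (Suc k) / esym ?\<mu> n k \<le> 1 * (\<Sum>i\<in>{k..<n}. ?\<mu> i)"
    using esym_Suc_div_le[OF ratio(2,3) assms(4)] by simp
  then have "esym ?\<mu> n (Suc k) / esym ?\<mu> n k / (\<Sum>i\<in>{k..<n}. ?\<mu> i) \<le> 1"
    by (subst pos_divide_le_eq[OF ratio(4)])
  then have "real (Suc k) * (esym ?\<mu> n (Suc k) / esym ?\<mu> n k / (\<Sum>i\<in>{k..<n}. ?\<mu> i)) \<le> real (Suc k) * 1"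
    by (rule mult_left_mono) simp
  then show ?thesis using ratio(1) by simp
qed

lemma kDPP_Er_ratio_le_window:
  assumes "A \<in> carrier_mat m n" and "is_sorted_eigs A lam"
    and "\<And>i. i \<in> {1..n} \<Longrightarrow> 0 < lam i" and "k < n"
    and "1 \<le> w" and "w \<le> k" and "lam (k - w + 1) / lam (k + min (n - k) w) \<le> \<rho>"
  shows "kDPP_expect A k (Er A) / OPT A lam k \<le> real (Suc k) / real (w + 1) * (1 + \<rho>)"
proof -
  note ratio = kDPP_Er_ratio_eq[OF assms(1-4)]
  let ?\<mu> = "\<lambda>i. lam (Suc i)"
  have "Suc (k + min (n - k) w - 1) = k + min (n - k) w" and "Suc (k - w) = k - w + 1"
    using assms(4,5) by auto
  then have "esym ?\<mu> n (Suc k) / esym ?\<mu> n k \<le> (1 + \<rho>) / real (w + 1) * (\<Sum>i\<in>{k..<n}. ?\<mu> i)"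
    using assms(4-7) by (intro esym_Suc_div_le_window[OF ratio(2,3)]) auto
  then have "esym ?\<mu> n (Suc k) / esym ?\<mu> n k / (\<Sum>i\<in>{k..<n}. ?\<mu> i) \<le> (1 + \<rho>) / real (w + 1)"
    by (subst pos_divide_le_eq[OF ratio(4)])
  then have "real (Suc k) * (esym ?\<mu> n (Suc k) / esym ?\<mu> n k / (\<Sum>i\<in>{k..<n}. ?\<mu> i))
      \<le> real (Suc k) * ((1 + \<rho>) / real (w + 1))"
    by (rule mult_left_mono) simp
  then show ?thesis using ratio(1) by simp
qed

lemma exp_2_le_9: "exp (2::real) \<le> 9"
proof -
  have "exp (2::real) = exp 1 * exp 1" by (simp add: exp_add[symmetric])
  also have "\<dots> \<le> 3 * 3" using exp_le by (intro mult_mono) auto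
  finally show ?thesis by simp
qed

lemma exp_4_le_81: "exp (4::real) \<le> 81"
proof -
  have "exp (4::real) = exp 2 * exp 2" by (simp add: exp_add[symmetric])
  also have "\<dots> \<le> 9 * 9" using exp_2_le_9 by (intro mult_mono) auto
  finally show ?thesis by simp
qed

lemma powr_le_exp_2:
  fixes p x :: real
  assumes p: "1 < p" and "0 \<le> x" and "x \<le> 1 + 2 / p"
  shows "x powr p \<le> exp 2"
proof -
  have "x powr p \<le> (1 + 2 / p) powr p" using assms by (intro powr_mono2) auto
  also have "\<dots> = exp (p * ln (1 + 2 / p))"
  proof -
    have "0 < 2 / p" using p by simp
    then have "1 + 2 / p \<noteq> 0" by linarith
    then show ?thesis unfolding powr_def by (simp add: mult.commute)
  qed
  also have "\<dots> \<le> exp (p * (2 / p))"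
    using p ln_add_one_self_le_self[of "2 / p"] mult_left_mono[of _ "2 / p" p] by simp
  finally show ?thesis using p by simp
qed

lemma poly_decay_window_ratio:
  fixes lam :: "nat \<Rightarrow> real"
  assumes p: "1 < p" and c1: "0 < c1" and c12: "c1 \<le> c2"
    and bnd: "\<And>i. i \<in> {1..n} \<Longrightarrow> c1 * real i powr (-p) \<le> lam i \<and> lam i \<le> c2 * real i powr (-p)"
    and w1: "1 \<le> w" and kn: "k < n" and wp: "real w * (p + 1) \<le> real k"
  shows "lam (k - w + 1) / lam (k + min (n - k) w) \<le> c2 / c1 * exp 2"
proof -
  define a where "a = real (k - w + 1)"
  define b where "b = real (k + min (n - k) w)"
  have "real w * 1 \<le> real w * (p + 1)" using p by (intro mult_left_mono) auto
  then have wk: "w \<le> k" using wp by linarith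
  have a: "a = real k - real w + 1" unfolding a_def using wk by simp
  have "0 < a" "0 < b" "b \<le> real k + real w" unfolding a_def b_def using kn w1 by auto
  have "lam (k - w + 1) / lam (k + min (n - k) w) \<le> (c2 * a powr (-p)) / (c1 * b powr (-p))"
    unfolding a_def b_def using bnd[of "k - w + 1"] bnd[of "k + min (n - k) w"] kn wk w1 c1 c12 \<open>0 < b\<close>
    by (intro frac_le) (auto simp: b_def)
  also have "\<dots> = c2 / c1 * (b / a) powr p"
    using \<open>0 < a\<close> \<open>0 < b\<close> c1 by (simp add: powr_minus powr_divide field_simps)
  also have "(b / a) powr p \<le> exp 2"
  proof (rule powr_le_exp_2[OF p])
    have "(1 + 2 / p) * (real k - real w) - (real k + real w) = 2 / p * (real k - real w * (p + 1))"
      using p by (simp add: field_simps)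
    moreover have "0 \<le> 2 / p * (real k - real w * (p + 1))" using wp p by simp
    ultimately have "real k + real w \<le> (1 + 2 / p) * (real k - real w)" by linarith
    also have "\<dots> \<le> (1 + 2 / p) * a" unfolding a using p by (intro mult_left_mono) auto
    finally show "b / a \<le> 1 + 2 / p" using \<open>b \<le> real k + real w\<close> \<open>0 < a\<close> by (simp add: divide_le_eq)
  qed (use \<open>0 < a\<close> \<open>0 < b\<close> in simp)
  then have "c2 / c1 * (b / a) powr p \<le> c2 / c1 * exp 2"
    using c1 c12 by (intro mult_left_mono) auto
  finally show ?thesis .
qed

lemma exp_decay_window_ratio:
  fixes lam :: "nat \<Rightarrow> real"
  assumes d0: "0 < \<delta>" and dh: "\<delta> < 1/2" and c1: "0 < c1" and c12: "c1 \<le> c2"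
    and bnd: "\<And>i. i \<in> {1..n} \<Longrightarrow> c1 * (1 - \<delta>) ^ i \<le> lam i \<and> lam i \<le> c2 * (1 - \<delta>) ^ i"
    and w1: "1 \<le> w" and wk: "w \<le> k" and kn: "k < n" and wd: "real w * \<delta> \<le> 1"
  shows "lam (k - w + 1) / lam (k + min (n - k) w) \<le> c2 / c1 * exp 4"
proof -
  let ?q = "1 - \<delta>"
  let ?a = "k - w + 1" and ?b = "k + min (n - k) w"
  have q: "0 < ?q" "?q \<le> 1" using d0 dh by auto
  have a: "?a \<in> {1..n}" and b: "?b \<in> {1..n}" using kn wk w1 by auto
  have "lam ?a \<le> c2 * ?q ^ ?a" "c1 * ?q ^ ?b \<le> lam ?b"
    using conjunct2[OF bnd[OF a]] conjunct1[OF bnd[OF b]] .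
  then have "lam ?a / lam ?b \<le> (c2 * ?q ^ ?a) / (c1 * ?q ^ ?b)"
    using c1 c12 q by (intro frac_le) auto
  also have "\<dots> = c2 / c1 * (?q ^ ?a / ?q ^ ?b)" by simp
  also have "\<dots> \<le> c2 / c1 * exp 4"
  proof (rule mult_left_mono)
    have "?q ^ ?a / ?q ^ ?b \<le> 1 / ?q ^ (2 * w)"
    proof -
      have "?q ^ ?a * ?q ^ (2 * w) = ?q ^ (?a + 2 * w)" by (simp add: power_add)
      also have "\<dots> \<le> ?q ^ ?b" using q wk w1 kn by (intro power_decreasing) (auto simp: min_def)
      finally show ?thesis using q by (simp add: field_simps)
    qed
    also have "1 / ?q ^ (2 * w) \<le> exp 4"
    proof -
      have "- \<delta> - 2 * \<delta>\<^sup>2 \<le> ln ?q" using d0 dh by (intro ln_one_minus_pos_lower_bound) auto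
      moreover have "2 * \<delta>\<^sup>2 \<le> \<delta>" using d0 dh by (simp add: power2_eq_square)
      ultimately have "real w * (- 2 * \<delta>) \<le> real w * ln ?q" by (intro mult_left_mono) auto
      then have "- 4 \<le> real (2 * w) * ln ?q" using wd by simp
      moreover have "?q ^ (2 * w) = exp (real (2 * w) * ln ?q)"
        using q exp_of_nat_mult[of "2 * w" "ln ?q"] by simp
      ultimately have "exp (- 4) \<le> ?q ^ (2 * w)" by simp
      then have "1 / ?q ^ (2 * w) \<le> 1 / exp (- 4)" using q by (intro divide_left_mono) auto
      then show ?thesis by (simp add: exp_minus field_simps)
    qed
    finally show "?q ^ ?a / ?q ^ ?b \<le> exp 4" .
  qed (use c1 c12 in simp)
  finally show ?thesis .
qed

lemma poly_decay_window_exists: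
  fixes p :: real
  assumes p: "1 < p" and k: "2 * p \<le> real k"
  obtains w where "1 \<le> w" "real w * (p + 1) \<le> real k" "real (Suc k) \<le> 3 * p * real (w + 1)"
proof -
  define x where "x = real k / (2 * p)"
  define w where "w = nat \<lfloor>x\<rfloor>"
  have x1: "1 \<le> x" unfolding x_def using k p by simp
  have wx: "real w \<le> x" and xw: "x < real w + 1" unfolding w_def using x1 by linarith+
  have "1 \<le> w" unfolding w_def using x1 by linarith
  moreover have "real w * (p + 1) \<le> real k"
  proof -
    have "real w * (p + 1) \<le> x * (p + 1)" using wx p by (intro mult_right_mono) auto
    also have "\<dots> = real k * ((p + 1) / (2 * p))" unfolding x_def by simp
    also have "\<dots> \<le> real k" using p mult_left_mono[of "(p + 1) / (2 * p)" 1 "real k"] by simp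
    finally show ?thesis .
  qed
  moreover have "real (Suc k) \<le> 3 * p * real (w + 1)"
  proof -
    have "real k = 2 * p * x" unfolding x_def using p by simp
    also have "\<dots> \<le> 2 * p * (real w + 1)" using xw p by simp
    finally have "real k \<le> 2 * p * (real w + 1)" .
    moreover have "1 \<le> p * (real w + 1)" using p \<open>1 \<le> w\<close> mult_mono[of 1 p 1 "real w + 1"] by simp
    moreover have "3 * p * real (w + 1) = 2 * p * (real w + 1) + p * (real w + 1)" by (simp add: algebra_simps)
    ultimately show ?thesis by linarith
  qed
  ultimately show ?thesis using that by blast
qed

lemma exp_decay_window_exists:
  fixes \<delta> :: real
  assumes d0: "0 < \<delta>" and dh: "\<delta> < 1/2" and k: "1 \<le> k"
  obtains w where "1 \<le> w" "w \<le> k" "real w * \<delta> \<le> 1" "real (Suc k) \<le> (1 + \<delta> * real k) * real (w + 1)"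
proof -
  define y where "y = 1 / \<delta>"
  define w where "w = min k (nat \<lfloor>y\<rfloor>)"
  have y2: "2 < y" unfolding y_def using d0 dh by (simp add: field_simps)
  have "1 \<le> w" "w \<le> k" unfolding w_def using k y2 by linarith+
  moreover have "real w * \<delta> \<le> 1"
  proof -
    have "real w \<le> y" unfolding w_def using y2 by linarith
    then show ?thesis using d0 unfolding y_def by (simp add: field_simps)
  qed
  moreover have "real (Suc k) \<le> (1 + \<delta> * real k) * real (w + 1)"
  proof (cases "w = k")
    case True
    then show ?thesis using d0 by (simp add: algebra_simps)
  next
    case False
    then have "y < real w + 1" unfolding w_def using y2 by linarith
    then have "1 \<le> \<delta> * (real w + 1)" using d0 unfolding y_def by (simp add: field_simps)
    then have "real k \<le> \<delta> * real k * (real w + 1)"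
      using mult_left_mono[of 1 "\<delta> * (real w + 1)" "real k"] by (simp add: mult_ac)
    then show ?thesis by (simp add: algebra_simps)
  qed
  ultimately show ?thesis using that by blast
qed

lemma kDPP_Er_ratio_poly_decay:
  assumes A: "A \<in> carrier_mat m n" and sorted: "is_sorted_eigs A lam"
    and c1: "0 < c1" and c12: "c1 \<le> c2" and kn: "k < n" and p: "1 < p"
    and bnd: "\<forall>i\<in>{1..n}. c1 * real i powr (-p) \<le> lam i \<and> lam i \<le> c2 * real i powr (-p)"
  shows "kDPP_expect A k (Er A) / OPT A lam k \<le> 100 * (c2 / c1) * p"
proof -
  have pos: "0 < lam i" if i: "i \<in> {1..n}" for i
  proof -
    have "0 < c1 * real i powr (-p)" using i c1 by simp
    moreover have "c1 * real i powr (-p) \<le> lam i" using bnd i by blast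
    ultimately show ?thesis by linarith
  qed
  have \<gamma>: "1 \<le> c2 / c1" using c1 c12 by simp
  show ?thesis
  proof (cases "real k < 2 * p")
    case True
    then have "kDPP_expect A k (Er A) / OPT A lam k \<le> 3 * p"
      using kDPP_Er_ratio_le[OF A sorted pos kn] p by simp
    also have "\<dots> \<le> 100 * (c2 / c1) * p" using mult_right_mono[OF \<gamma>, of p] p by linarith
    finally show ?thesis .
  next
    case False
    then have "2 * p \<le> real k" by simp
    then obtain w where w1: "1 \<le> w" and wp: "real w * (p + 1) \<le> real k"
      and kw: "real (Suc k) \<le> 3 * p * real (w + 1)"
      using poly_decay_window_exists[OF p] by blast
    have "real w * 1 \<le> real w * (p + 1)" using p by (intro mult_left_mono) auto
    then have "w \<le> k" using wp by linarith
    have "kDPP_expect A k (Er A) / OPT A lam k \<le> real (Suc k) / real (w + 1) * (1 + c2 / c1 * exp 2)"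
      using bnd by (intro kDPP_Er_ratio_le_window[OF A sorted pos kn w1 \<open>w \<le> k\<close>]
          poly_decay_window_ratio[OF p c1 c12 _ w1 kn wp]) auto
    also have "\<dots> \<le> 3 * p * (10 * (c2 / c1))"
    proof (rule mult_mono)
      show "real (Suc k) / real (w + 1) \<le> 3 * p" using kw by (simp add: divide_le_eq)
      have "c2 / c1 * exp 2 \<le> c2 / c1 * 9" using exp_2_le_9 \<gamma> by (intro mult_left_mono) auto
      then show "1 + c2 / c1 * exp 2 \<le> 10 * (c2 / c1)" using \<gamma> by linarith
    qed (use \<gamma> p mult_nonneg_nonneg[of "c2 / c1" "exp 2"] in auto)
    also have "\<dots> = 30 * (c2 / c1 * p)" by simp
    also have "\<dots> \<le> 100 * (c2 / c1 * p)" using \<gamma> p mult_nonneg_nonneg[of "c2 / c1" p] by (intro mult_right_mono) auto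
    also have "\<dots> = 100 * (c2 / c1) * p" by simp
    finally show ?thesis .
  qed
qed

lemma kDPP_Er_ratio_exp_decay:
  assumes A: "A \<in> carrier_mat m n" and sorted: "is_sorted_eigs A lam"
    and c1: "0 < c1" and c12: "c1 \<le> c2" and k1: "1 \<le> k" and kn: "k < n"
    and d0: "0 < \<delta>" and d1: "\<delta> < 1"
    and bnd: "\<forall>i\<in>{1..n}. c1 * (1 - \<delta>) ^ i \<le> lam i \<and> lam i \<le> c2 * (1 - \<delta>) ^ i"
  shows "kDPP_expect A k (Er A) / OPT A lam k \<le> 100 * (c2 / c1) * (1 + \<delta> * real k)"
proof -
  have pos: "0 < lam i" if i: "i \<in> {1..n}" for i
  proof -
    have "0 < c1 * (1 - \<delta>) ^ i" using c1 d1 by simp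
    moreover have "c1 * (1 - \<delta>) ^ i \<le> lam i" using bnd i by blast
    ultimately show ?thesis by linarith
  qed
  have \<gamma>: "1 \<le> c2 / c1" using c1 c12 by simp
  have dk: "0 \<le> \<delta> * real k" using d0 by simp
  show ?thesis
  proof (cases "1/2 \<le> \<delta>")
    case True
    then have "kDPP_expect A k (Er A) / OPT A lam k \<le> 2 * (1 + \<delta> * real k)"
      using kDPP_Er_ratio_le[OF A sorted pos kn] mult_right_mono[OF True, of "real k"] by simp
    also have "\<dots> \<le> 100 * (c2 / c1) * (1 + \<delta> * real k)" using \<gamma> dk by (intro mult_right_mono) auto
    finally show ?thesis .
  next
    case False
    then obtain w where w1: "1 \<le> w" and wk: "w \<le> k" and wd: "real w * \<delta> \<le> 1"
      and kw: "real (Suc k) \<le> (1 + \<delta> * real k) * real (w + 1)"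
      using exp_decay_window_exists[OF d0 _ k1] by auto
    have "kDPP_expect A k (Er A) / OPT A lam k \<le> real (Suc k) / real (w + 1) * (1 + c2 / c1 * exp 4)"
      using bnd False by (intro kDPP_Er_ratio_le_window[OF A sorted pos kn w1 wk]
          exp_decay_window_ratio[OF d0 _ c1 c12 _ w1 wk kn wd]) auto
    also have "\<dots> \<le> (1 + \<delta> * real k) * (82 * (c2 / c1))"
    proof (rule mult_mono)
      show "real (Suc k) / real (w + 1) \<le> 1 + \<delta> * real k" using kw by (simp add: divide_le_eq)
      have "c2 / c1 * exp 4 \<le> c2 / c1 * 81" using exp_4_le_81 \<gamma> by (intro mult_left_mono) auto
      then show "1 + c2 / c1 * exp 4 \<le> 82 * (c2 / c1)" using \<gamma> by linarith
    qed (use \<gamma> dk mult_nonneg_nonneg[of "c2 / c1" "exp 4"] in auto)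
    also have "\<dots> = 82 * (c2 / c1 * (1 + \<delta> * real k))" by simp
    also have "\<dots> \<le> 100 * (c2 / c1 * (1 + \<delta> * real k))"
      using \<gamma> dk mult_nonneg_nonneg[of "c2 / c1" "1 + \<delta> * real k"] by (intro mult_right_mono) auto
    also have "\<dots> = 100 * (c2 / c1) * (1 + \<delta> * real k)" by simp
    finally show ?thesis .
  qed
qed

theorem theorem2:
  shows "\<exists>c::real. \<forall>(m::nat) (n::nat) (A::real mat) (lam::nat \<Rightarrow> real) (c1::real) (c2::real) (k::nat).
    A \<in> carrier_mat m n \<longrightarrow> is_sorted_eigs A lam \<longrightarrow> 0 < c1 \<longrightarrow> c1 \<le> c2 \<longrightarrow>
    1 \<le> k \<longrightarrow> k \<le> n - 1 \<longrightarrow>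
    ((\<forall>p::real. p > 1 \<longrightarrow>
        (\<forall>i\<in>{1..n}. c1 * real i powr (-p) \<le> lam i \<and> lam i \<le> c2 * real i powr (-p)) \<longrightarrow>
        kDPP_expect A k (Er A) / OPT A lam k \<le> c * (c2 / c1) * p) \<and>
     (\<forall>\<delta>::real. 0 < \<delta> \<longrightarrow> \<delta> < 1 \<longrightarrow>
        (\<forall>i\<in>{1..n}. c1 * (1 - \<delta>) ^ i \<le> lam i \<and> lam i \<le> c2 * (1 - \<delta>) ^ i) \<longrightarrow>
        kDPP_expect A k (Er A) / OPT A lam k \<le> c * (c2 / c1) * (1 + \<delta> * real k)))"
proof (intro exI[of _ 100] allI impI conjI)
  fix m n k :: nat and A :: "real mat" and lam :: "nat \<Rightarrow> real" and c1 c2 p \<delta> :: real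
  assume A: "A \<in> carrier_mat m n" and sorted: "is_sorted_eigs A lam"
    and c1: "0 < c1" and c12: "c1 \<le> c2" and k1: "1 \<le> k" and "k \<le> n - 1"
  then have kn: "k < n" by linarith
  show "kDPP_expect A k (Er A) / OPT A lam k \<le> 100 * (c2 / c1) * p"
    if "p > 1" and "\<forall>i\<in>{1..n}. c1 * real i powr (-p) \<le> lam i \<and> lam i \<le> c2 * real i powr (-p)"
    using kDPP_Er_ratio_poly_decay[OF A sorted c1 c12 kn] that by blast
  show "kDPP_expect A k (Er A) / OPT A lam k \<le> 100 * (c2 / c1) * (1 + \<delta> * real k)"
    if "0 < \<delta>" and "\<delta> < 1" and "\<forall>i\<in>{1..n}. c1 * (1 - \<delta>) ^ i \<le> lam i \<and> lam i \<le> c2 * (1 - \<delta>) ^ i"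
    using kDPP_Er_ratio_exp_decay[OF A sorted c1 c12 k1 kn] that by blast
qed

end
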